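(* For any finite group $G$ and any prime $p$, \[ \sum_{H}\big(1-\chi(\mathcal S^*_{N_G(H)/H})+\mu(H)\big)=0, \] \[ \sum_{H}\sum_{x\in C_G(H)}\big(1-\chi(\mathcal S^*_{C_{N_G(H)}(x)/H})+\mu(H)\big)=0, \] \[ \sum_{H}\big(|H|-\chi(\mathcal S^*_{N_G(H)/H})\,|H|+\mu(H)\big)=\frac{p-1}{p}\sum_{C}|C|, \] where $H$ runs over the set of nonidentity $p$-subgroups of $G$ and $C$ over the set of nonidentity cyclic $p$-subgroups of $G$.
   Context: For a finite group $X$, $\mathcal S^*_X$ denotes the poset of nonidentity $p$-subgroups of $X$ ordered by inclusion, regarded as a finite category; $\chi(\mathcal S^*_X)$ is its Euler characteristic, which for a finite poset equals $\sum_{a,b}\mu_X(a,b)$ where $\mu_X$ is the Möbius function of that poset (the inverse of its zeta matrix $\zeta(a,b)=1$ if $a\le b$, $0$ otherwise); it is $0$ if the poset is empty. For $x\in C_G(H)$, $C_{N_G(H)}(x)$ contains $H$, so $C_{N_G(H)}(x)/H$ is a group. $\mu(H)=\mu(1,H)$ where $\mu$ is the Möbius function of the poset of all subgroups of $G$ ($\mu(H,H)=1$, $\mu(H,K)=-\sum_{H\le L<K}\mu(H,L)$ for $H<K$). *)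

theory Defs
  imports "HOL-Algebra.Algebra"
begin

definition poset_mobius :: "('a \<Rightarrow> 'a \<Rightarrow> bool) \<Rightarrow> 'a set \<Rightarrow> 'a \<Rightarrow> 'a \<Rightarrow> int" where
  "poset_mobius R P =
     (THE m. (\<forall>a\<in>P. \<forall>b\<in>P.
                 (\<Sum>c\<in>P. m a c * (if R c b then 1 else 0)) = (if a = b then 1 else 0))
           \<and> (\<forall>a b. a \<notin> P \<or> b \<notin> P \<longrightarrow> m a b = 0))"

definition poset_euler_char :: "('a \<Rightarrow> 'a \<Rightarrow> bool) \<Rightarrow> 'a set \<Rightarrow> int" where
  "poset_euler_char R P = (\<Sum>a\<in>P. \<Sum>b\<in>P. poset_mobius R P a b)"

definition p_subgroup :: "nat \<Rightarrow> ('a, 'b) monoid_scheme \<Rightarrow> 'a set \<Rightarrow> bool" where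
  "p_subgroup p G H \<longleftrightarrow> subgroup H G \<and> (\<exists>k. card H = p ^ k)"

definition nonid_p_subgroups :: "nat \<Rightarrow> ('a, 'b) monoid_scheme \<Rightarrow> 'a set set" where
  "nonid_p_subgroups p G = {H. p_subgroup p G H \<and> H \<noteq> {\<one>\<^bsub>G\<^esub>}}"

definition chi_S :: "nat \<Rightarrow> ('a, 'b) monoid_scheme \<Rightarrow> int" where
  "chi_S p G = poset_euler_char (\<subseteq>) (nonid_p_subgroups p G)"

definition nonid_cyclic_p_subgroups :: "nat \<Rightarrow> ('a, 'b) monoid_scheme \<Rightarrow> 'a set set" where
  "nonid_cyclic_p_subgroups p G =
     {C \<in> nonid_p_subgroups p G. \<exists>g\<in>carrier G. C = generate G {g}}"

definition centralizer :: "('a, 'b) monoid_scheme \<Rightarrow> 'a set \<Rightarrow> 'a set" where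
  "centralizer G S = {g \<in> carrier G. \<forall>s\<in>S. g \<otimes>\<^bsub>G\<^esub> s = s \<otimes>\<^bsub>G\<^esub> g}"

definition subgroup_mu :: "('a, 'b) monoid_scheme \<Rightarrow> 'a set \<Rightarrow> int" where
  "subgroup_mu G H = poset_mobius (\<subseteq>) {K. subgroup K G} {\<one>\<^bsub>G\<^esub>} H"

end

theory Submission
  imports Defs "HOL-Number_Theory.Totient"
begin

text \<open>
  Let \<open>S\<close> be the poset of nonidentity \<open>p\<close>-subgroups. Its Euler characteristic is the total mass
  of any coweighting; since all subgroups of a \<open>p\<close>-group are \<open>p\<close>-groups, \<open>-\<mu>\<close> is one, so
  \<open>\<chi>(S) = -\<Sigma>\<^sub>H \<mu>(H)\<close>. Equally \<open>\<chi>(S) = \<Sigma>\<^sub>H v(H)\<close> for a weighting \<open>v\<close>, and \<open>v(H) = 1 - \<chi>(T\<^sub>H)\<close>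
  where \<open>T\<^sub>H\<close> is the part of \<open>S\<close> strictly above \<open>H\<close>. Since normalizers grow in \<open>p\<close>-groups,
  \<open>K \<mapsto> K \<inter> N\<^sub>G(H)\<close> retracts \<open>T\<^sub>H\<close> onto the \<open>p\<close>-subgroups strictly between \<open>H\<close> and \<open>N\<^sub>G(H)\<close>,
  which the correspondence theorem identifies with \<open>S*(N\<^sub>G(H)/H)\<close>; this gives the first identity.
  The second is the first one for each centralizer \<open>C\<^sub>G(x)\<close>, after swapping the sums. For the
  third, \<open>\<Sigma>\<^sub>H v(H)|H|\<close> counts pairs \<open>g \<in> H\<close>: \<open>g = 1\<close> contributes \<open>\<chi>(S)\<close>, and \<open>g \<noteq> 1\<close>
  contributes \<open>1\<close> exactly when \<open>\<langle>g\<rangle>\<close> is a \<open>p\<close>-group; a cyclic group of order \<open>p\<^sup>k\<close> has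
  \<open>\<phi>(p\<^sup>k) = (p - 1)/p \<cdot> p\<^sup>k\<close> generators.
\<close>

section \<open>Euler characteristics of finite posets\<close>

definition poset :: "('a \<Rightarrow> 'a \<Rightarrow> bool) \<Rightarrow> 'a set \<Rightarrow> bool" where
  "poset R P \<longleftrightarrow> (\<forall>a\<in>P. R a a) \<and> (\<forall>a\<in>P. \<forall>b\<in>P. R a b \<and> R b a \<longrightarrow> a = b)
     \<and> (\<forall>a\<in>P. \<forall>b\<in>P. \<forall>c\<in>P. R a b \<and> R b c \<longrightarrow> R a c)"

definition zeta_left_inverse :: "('a \<Rightarrow> 'a \<Rightarrow> bool) \<Rightarrow> 'a set \<Rightarrow> ('a \<Rightarrow> 'a \<Rightarrow> int) \<Rightarrow> bool" where
  "zeta_left_inverse R P m \<longleftrightarrow>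
     (\<forall>a\<in>P. \<forall>b\<in>P. (\<Sum>c\<in>P. m a c * (if R c b then 1 else 0)) = (if a = b then 1 else 0))
     \<and> (\<forall>a b. a \<notin> P \<or> b \<notin> P \<longrightarrow> m a b = 0)"

text \<open>Coweightings in the sense of Leinster; a weighting is a coweighting of the opposite order.\<close>
definition coweighting :: "('a \<Rightarrow> 'a \<Rightarrow> bool) \<Rightarrow> 'a set \<Rightarrow> ('a \<Rightarrow> int) \<Rightarrow> bool" where
  "coweighting R P w \<longleftrightarrow> (\<forall>b\<in>P. (\<Sum>c\<in>{c\<in>P. R c b}. w c) = 1)"

lemma poset_subset: "poset R P \<Longrightarrow> Q \<subseteq> P \<Longrightarrow> poset R Q"
  unfolding poset_def by blast

lemma poset_converse: "poset R P \<Longrightarrow> poset (\<lambda>a b. R b a) P"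
  unfolding poset_def by blast

lemma poset_subseteq: "poset (\<subseteq>) P"
  unfolding poset_def by auto

lemma poset_has_maximal:
  assumes "finite P" "P \<noteq> {}" "poset R P"
  shows "\<exists>x\<in>P. \<forall>b\<in>P. R x b \<longrightarrow> b = x"
proof -
  define below where "below x = card {c\<in>P. R c x}" for x
  have "Max (below ` P) \<in> below ` P" using assms(1,2) by simp
  then obtain x where x: "x \<in> P" "below x = Max (below ` P)" by auto
  have "b = x" if b: "b \<in> P" "R x b" for b
  proof (rule ccontr)
    assume "b \<noteq> x"
    then have "{c\<in>P. R c x} \<subset> {c\<in>P. R c b}"
      using assms(3) b x(1) unfolding poset_def by blast
    then have "below x < below b"
      unfolding below_def using assms(1) by (intro psubset_card_mono) auto
    moreover have "below b \<le> Max (below ` P)" using assms(1) b(1) by simp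
    ultimately show False using x(2) by simp
  qed
  with x(1) show ?thesis by blast
qed

text \<open>Adjoining a maximal element \<open>x\<close>: row \<open>x\<close> of the new inverse is the unit vector and
  column \<open>x\<close> is chosen so that the old rows become orthogonal to column \<open>x\<close> of zeta.\<close>
lemma zeta_left_inverse_insert_maximal:
  assumes fin: "finite P" and po: "poset R (insert x P)" and x: "x \<notin> P" "\<forall>b\<in>P. \<not> R x b"
    and m: "zeta_left_inverse R P m"
  shows "\<exists>m'. zeta_left_inverse R (insert x P) m'"
proof
  define m' where "m' a b =
    (if a \<in> insert x P \<and> b \<in> insert x P then
       if b = x then (if a = x then 1 else - (\<Sum>c\<in>P. m a c * (if R c x then 1 else 0)))
       else if a = x then 0 else m a b
     else 0)" for a b
  have Rxx: "R x x" using po unfolding poset_def by simp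
  have m_inv: "(\<Sum>c\<in>P. m a c * (if R c b then 1 else 0)) = (if a = b then 1 else 0)"
    if "a \<in> P" "b \<in> P" for a b
    using m that unfolding zeta_left_inverse_def by blast
  have row_x: "(\<Sum>c\<in>P. m' x c * (if R c b then 1 else 0)) = 0" for b
    using x(1) by (intro sum.neutral) (auto simp: m'_def)
  have row: "(\<Sum>c\<in>P. m' a c * (if R c b then 1 else 0)) = (\<Sum>c\<in>P. m a c * (if R c b then 1 else 0))"
    if "a \<in> P" for a b
    using that x(1) by (intro sum.cong) (auto simp: m'_def)
  show "zeta_left_inverse R (insert x P) m'"
    unfolding zeta_left_inverse_def
  proof (intro conjI ballI allI impI)
    fix a b assume "a \<notin> insert x P \<or> b \<notin> insert x P"
    then show "m' a b = 0" by (auto simp: m'_def)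
  next
    fix a b assume a: "a \<in> insert x P" and b: "b \<in> insert x P"
    have split: "(\<Sum>c\<in>insert x P. m' a c * (if R c b then 1 else 0))
        = m' a x * (if R x b then 1 else 0) + (\<Sum>c\<in>P. m' a c * (if R c b then 1 else 0))"
      using fin x(1) by simp
    show "(\<Sum>c\<in>insert x P. m' a c * (if R c b then 1 else 0)) = (if a = b then 1 else 0)"
    proof (cases "a = x")
      case True
      have "m' x x = 1" by (simp add: m'_def)
      then show ?thesis using True split row_x b x(2) Rxx by auto
    next
      case False
      then have aP: "a \<in> P" using a by simp
      have "m' a x = - (\<Sum>c\<in>P. m a c * (if R c x then 1 else 0))"
        using aP x(1) False by (simp add: m'_def)
      then show ?thesis
        using split row[OF aP] b x(2) m_inv[OF aP] Rxx False by (cases "b = x") auto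
    qed
  qed
qed

lemma zeta_left_inverse_exists:
  assumes "finite P" "poset R P"
  shows "\<exists>m. zeta_left_inverse R P m"
  using assms
proof (induction P rule: finite_psubset_induct)
  case (psubset P)
  show ?case
  proof (cases "P = {}")
    case True
    then show ?thesis unfolding zeta_left_inverse_def by (intro exI[of _ "\<lambda>a b. 0"]) auto
  next
    case False
    obtain x where x: "x \<in> P" "\<forall>b\<in>P. R x b \<longrightarrow> b = x"
      using poset_has_maximal[OF psubset.hyps False psubset.prems] by blast
    obtain m where "zeta_left_inverse R (P - {x}) m"
      using psubset.IH[of "P - {x}"] poset_subset[OF psubset.prems] x(1) by blast
    then have "\<exists>m'. zeta_left_inverse R (insert x (P - {x})) m'"
      using psubset.hyps psubset.prems x by (intro zeta_left_inverse_insert_maximal) (auto simp: insert_absorb)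
    then show ?thesis using x(1) by (simp add: insert_absorb)
  qed
qed

text \<open>Since the zeta matrix of the opposite order is the transpose, \<open>m = m \<zeta> n\<^sup>T = n\<^sup>T\<close>.\<close>
lemma zeta_left_inverse_transpose:
  assumes fin: "finite P" and m: "zeta_left_inverse R P m" and n: "zeta_left_inverse (\<lambda>a b. R b a) P n"
    and a: "a \<in> P" and b: "b \<in> P"
  shows "m a b = n b a"
proof -
  let ?z = "\<lambda>c d. if R c d then 1 else 0 :: int"
  have m1: "(\<Sum>c\<in>P. m a c * ?z c d) = (if a = d then 1 else 0)" if "d \<in> P" for d
    using m a that unfolding zeta_left_inverse_def by blast
  have n1: "(\<Sum>d\<in>P. n b d * ?z c d) = (if b = c then 1 else 0)" if "c \<in> P" for c
    using n b that unfolding zeta_left_inverse_def by blast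
  have "n b a = (\<Sum>d\<in>P. if a = d then n b d else 0)"
    using fin a by simp
  also have "\<dots> = (\<Sum>d\<in>P. n b d * (\<Sum>c\<in>P. m a c * ?z c d))"
    using m1 by (intro sum.cong) auto
  also have "\<dots> = (\<Sum>d\<in>P. \<Sum>c\<in>P. m a c * (n b d * ?z c d))"
    by (simp add: sum_distrib_left mult.left_commute)
  also have "\<dots> = (\<Sum>c\<in>P. m a c * (\<Sum>d\<in>P. n b d * ?z c d))"
    by (subst sum.swap) (simp add: sum_distrib_left)
  also have "\<dots> = (\<Sum>c\<in>P. if b = c then m a c else 0)"
    using n1 by (intro sum.cong) auto
  also have "\<dots> = m a b"
    using fin b by simp
  finally show ?thesis by simp
qed

lemma zeta_left_inverse_poset_mobius:
  assumes "finite P" "poset R P"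
  shows "zeta_left_inverse R P (poset_mobius R P)"
proof -
  obtain m where m: "zeta_left_inverse R P m" using zeta_left_inverse_exists[OF assms] by blast
  obtain n where n: "zeta_left_inverse (\<lambda>a b. R b a) P n"
    using zeta_left_inverse_exists[OF assms(1) poset_converse[OF assms(2)]] by blast
  have "m' = m" if "zeta_left_inverse R P m'" for m'
  proof (intro ext)
    fix a b show "m' a b = m a b"
      using zeta_left_inverse_transpose[OF assms(1) that n] zeta_left_inverse_transpose[OF assms(1) m n]
        that m unfolding zeta_left_inverse_def by (cases "a \<in> P \<and> b \<in> P") auto
  qed
  then have "poset_mobius R P = m"
    unfolding poset_mobius_def zeta_left_inverse_def[symmetric] using m by (intro the_equality)
  with m show ?thesis by simp
qed

lemma poset_euler_char_converse:
  assumes "finite P" "poset R P"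
  shows "poset_euler_char (\<lambda>a b. R b a) P = poset_euler_char R P"
proof -
  have "poset_mobius R P a b = poset_mobius (\<lambda>a b. R b a) P b a" if "a \<in> P" "b \<in> P" for a b
    using zeta_left_inverse_transpose[OF assms(1) zeta_left_inverse_poset_mobius[OF assms]
        zeta_left_inverse_poset_mobius[OF assms(1) poset_converse[OF assms(2)]] that] .
  then have "poset_euler_char R P = (\<Sum>a\<in>P. \<Sum>b\<in>P. poset_mobius (\<lambda>a b. R b a) P b a)"
    unfolding poset_euler_char_def by (intro sum.cong) auto
  then show ?thesis
    unfolding poset_euler_char_def by (subst sum.swap) simp
qed

lemma coweighting_poset_mobius_column_sum:
  assumes "finite P" "poset R P"
  shows "coweighting R P (\<lambda>b. \<Sum>a\<in>P. poset_mobius R P a b)"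
  unfolding coweighting_def
proof
  fix b assume b: "b \<in> P"
  have "(\<Sum>c\<in>{c\<in>P. R c b}. \<Sum>a\<in>P. poset_mobius R P a c)
      = (\<Sum>c\<in>P. \<Sum>a\<in>P. poset_mobius R P a c * (if R c b then 1 else 0))"
    using assms(1) by (simp add: sum.inter_filter) (intro sum.cong refl; simp)
  also have "\<dots> = (\<Sum>a\<in>P. \<Sum>c\<in>P. poset_mobius R P a c * (if R c b then 1 else 0))"
    by (rule sum.swap)
  also have "\<dots> = (\<Sum>a\<in>P. if a = b then 1 else 0)"
    using zeta_left_inverse_poset_mobius[OF assms] b unfolding zeta_left_inverse_def
    by (intro sum.cong refl) blast
  also have "\<dots> = 1" using assms(1) b by simp
  finally show "(\<Sum>c\<in>{c\<in>P. R c b}. \<Sum>a\<in>P. poset_mobius R P a c) = 1" .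
qed

lemma coweighting_exists:
  assumes "finite P" "poset R P"
  shows "\<exists>w. coweighting R P w"
  using coweighting_poset_mobius_column_sum[OF assms] by blast

lemma coweighting_at:
  assumes "finite P" "poset R P" "coweighting R P w" "b \<in> P"
  shows "w b = 1 - (\<Sum>c\<in>{c\<in>P. R c b \<and> c \<noteq> b}. w c)"
proof -
  have "{c\<in>P. R c b} = insert b {c\<in>P. R c b \<and> c \<noteq> b}"
    using assms(2,4) unfolding poset_def by auto
  moreover have "finite {c\<in>P. R c b \<and> c \<noteq> b}" using assms(1) by simp
  ultimately have "(\<Sum>c\<in>{c\<in>P. R c b}. w c) = w b + (\<Sum>c\<in>{c\<in>P. R c b \<and> c \<noteq> b}. w c)"
    by simp
  then show ?thesis using assms(3,4) unfolding coweighting_def by simp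
qed

lemma coweighting_unique:
  assumes "finite P" "poset R P" "coweighting R P w" "coweighting R P w'" "b \<in> P"
  shows "w b = w' b"
  using assms(5)
proof (induction b rule: measure_induct_rule[of "\<lambda>b. card {c\<in>P. R c b \<and> c \<noteq> b}"])
  case (less b)
  have "w c = w' c" if c: "c \<in> {c\<in>P. R c b \<and> c \<noteq> b}" for c
  proof -
    have "{d\<in>P. R d c \<and> d \<noteq> c} \<subset> {d\<in>P. R d b \<and> d \<noteq> b}"
      using c less.prems assms(2) unfolding poset_def by blast
    then have "card {d\<in>P. R d c \<and> d \<noteq> c} < card {d\<in>P. R d b \<and> d \<noteq> b}"
      using assms(1) by (intro psubset_card_mono) auto
    then show ?thesis using less.IH c by simp
  qed
  then have "(\<Sum>c\<in>{c\<in>P. R c b \<and> c \<noteq> b}. w c) = (\<Sum>c\<in>{c\<in>P. R c b \<and> c \<noteq> b}. w' c)"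
    by (rule sum.cong[OF refl])
  then show ?case
    using coweighting_at[OF assms(1,2,3) less.prems] coweighting_at[OF assms(1,2,4) less.prems] by simp
qed

lemma poset_euler_char_eq_sum_coweighting:
  assumes "finite P" "poset R P" "coweighting R P w"
  shows "poset_euler_char R P = (\<Sum>b\<in>P. w b)"
proof -
  have "poset_euler_char R P = (\<Sum>b\<in>P. \<Sum>a\<in>P. poset_mobius R P a b)"
    unfolding poset_euler_char_def by (rule sum.swap)
  also have "\<dots> = (\<Sum>b\<in>P. w b)"
    using coweighting_unique[OF assms(1,2) coweighting_poset_mobius_column_sum[OF assms(1,2)] assms(3)]
    by (intro sum.cong) auto
  finally show ?thesis .
qed

lemma poset_euler_char_eq_sum_weighting:
  assumes "finite P" "poset R P" "coweighting (\<lambda>a b. R b a) P v"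
  shows "poset_euler_char R P = (\<Sum>b\<in>P. v b)"
  using poset_euler_char_converse[OF assms(1,2)]
    poset_euler_char_eq_sum_coweighting[OF assms(1) poset_converse[OF assms(2)] assms(3)] by simp

lemma coweighting_down_closed:
  assumes "coweighting R P w" "Q \<subseteq> P" "\<And>b c. b \<in> Q \<Longrightarrow> c \<in> P \<Longrightarrow> R c b \<Longrightarrow> c \<in> Q"
  shows "coweighting R Q w"
  unfolding coweighting_def
proof
  fix b assume b: "b \<in> Q"
  then have "{c\<in>Q. R c b} = {c\<in>P. R c b}" using assms(2,3) by blast
  then show "(\<Sum>c\<in>{c\<in>Q. R c b}. w c) = 1" using assms(1,2) b unfolding coweighting_def by auto
qed

lemma poset_euler_char_strictly_below:
  assumes "finite P" "poset R P" "coweighting R P w" "x \<in> P"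
  shows "poset_euler_char R {c\<in>P. R c x \<and> c \<noteq> x} = 1 - w x"
proof -
  have "coweighting R {c\<in>P. R c x \<and> c \<noteq> x} w"
  proof (rule coweighting_down_closed[OF assms(3)])
    fix b c assume b: "b \<in> {c\<in>P. R c x \<and> c \<noteq> x}" and c: "c \<in> P" "R c b"
    then have "R c x" "R x c \<longrightarrow> c = x" "c = x \<longrightarrow> b = x"
      using assms(2,4) unfolding poset_def by blast+
    then show "c \<in> {c\<in>P. R c x \<and> c \<noteq> x}" using b c by auto
  qed auto
  then have "poset_euler_char R {c\<in>P. R c x \<and> c \<noteq> x} = (\<Sum>c\<in>{c\<in>P. R c x \<and> c \<noteq> x}. w c)"
    using assms(1,2) by (intro poset_euler_char_eq_sum_coweighting) (auto intro: poset_subset)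
  then show ?thesis using coweighting_at[OF assms] by linarith
qed

lemma poset_euler_char_greatest:
  assumes "finite P" "poset R P" "m \<in> P" "\<And>c. c \<in> P \<Longrightarrow> R c m"
  shows "poset_euler_char R P = 1"
proof -
  obtain w where w: "coweighting R P w" using coweighting_exists[OF assms(1,2)] by blast
  have "(\<Sum>c\<in>{c\<in>P. R c m}. w c) = 1" using w assms(3) unfolding coweighting_def by blast
  moreover have "{c\<in>P. R c m} = P" using assms(4) by blast
  ultimately have "(\<Sum>c\<in>P. w c) = 1" by simp
  then show ?thesis using poset_euler_char_eq_sum_coweighting[OF assms(1,2) w] by simp
qed

lemma poset_euler_char_iso:
  assumes "finite P" "poset R P" "finite P'" "poset R' P'" "bij_betw f P P'"
    "\<And>a b. a \<in> P \<Longrightarrow> b \<in> P \<Longrightarrow> R a b \<longleftrightarrow> R' (f a) (f b)"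
  shows "poset_euler_char R P = poset_euler_char R' P'"
proof -
  obtain w where w: "coweighting R' P' w" using coweighting_exists[OF assms(3,4)] by blast
  have "coweighting R P (w \<circ> f)"
    unfolding coweighting_def
  proof
    fix b assume b: "b \<in> P"
    have fb: "f b \<in> P'" using assms(5) b by (auto simp: bij_betw_def)
    have "f ` {c\<in>P. R c b} = {c\<in>P'. R' c (f b)}"
    proof
      show "f ` {c\<in>P. R c b} \<subseteq> {c\<in>P'. R' c (f b)}" using assms(5,6) b by (auto simp: bij_betw_def)
      show "{c\<in>P'. R' c (f b)} \<subseteq> f ` {c\<in>P. R c b}"
      proof
        fix c assume c: "c \<in> {c\<in>P'. R' c (f b)}"
        then obtain a where a: "a \<in> P" "c = f a" using assms(5) by (auto simp: bij_betw_def)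
        then show "c \<in> f ` {c\<in>P. R c b}" using assms(6)[OF a(1) b] c by auto
      qed
    qed
    moreover have "inj_on f {c\<in>P. R c b}" using assms(5) by (auto simp: bij_betw_def inj_on_def)
    ultimately have "(\<Sum>c\<in>{c\<in>P. R c b}. (w \<circ> f) c) = (\<Sum>c\<in>{c\<in>P'. R' c (f b)}. w c)"
      by (metis sum.reindex)
    also have "\<dots> = 1" using w fb unfolding coweighting_def by simp
    finally show "(\<Sum>c\<in>{c\<in>P. R c b}. (w \<circ> f) c) = 1" .
  qed
  then have "poset_euler_char R P = (\<Sum>c\<in>P. w (f c))"
    using poset_euler_char_eq_sum_coweighting[OF assms(1,2)] by simp
  also have "\<dots> = (\<Sum>c\<in>P'. w c)"
    using assms(5) by (metis bij_betw_def sum.reindex_cong)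
  also have "\<dots> = poset_euler_char R' P'" using poset_euler_char_eq_sum_coweighting[OF assms(3,4) w] by simp
  finally show ?thesis .
qed

locale poset_retraction =
  fixes R :: "'a \<Rightarrow> 'a \<Rightarrow> bool" and P :: "'a set" and f :: "'a \<Rightarrow> 'a"
  assumes poset: "poset R P"
    and maps_to: "f ` P \<subseteq> P"
    and deflationary: "\<And>x. x \<in> P \<Longrightarrow> R (f x) x"
    and mono: "\<And>x y. x \<in> P \<Longrightarrow> y \<in> P \<Longrightarrow> R x y \<Longrightarrow> R (f x) (f y)"
    and idem: "\<And>x. x \<in> P \<Longrightarrow> f (f x) = f x"
begin

lemma strictly_below_retraction:
  assumes x: "x \<in> P"
  shows "poset_retraction R {c\<in>P. R c x \<and> c \<noteq> x} f"
proof
  show "poset R {c\<in>P. R c x \<and> c \<noteq> x}" using poset by (rule poset_subset) blast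
  show "f ` {c\<in>P. R c x \<and> c \<noteq> x} \<subseteq> {c\<in>P. R c x \<and> c \<noteq> x}"
  proof clarify
    fix y assume y: "y \<in> P" "R y x" "y \<noteq> x"
    have fy: "f y \<in> P" "R (f y) y" using maps_to deflationary y(1) by auto
    then have "R (f y) x" using poset x y unfolding poset_def by blast
    moreover have "f y \<noteq> x" using fy poset x y unfolding poset_def by blast
    ultimately show "f y \<in> P \<and> R (f y) x \<and> f y \<noteq> x" using fy by blast
  qed
qed (use deflationary mono idem in auto)

lemma image_strictly_below_fixed:
  assumes "x \<in> P" "f x = x"
  shows "f ` {c\<in>P. R c x \<and> c \<noteq> x} = {c\<in>f ` P. R c x \<and> c \<noteq> x}"
proof
  interpret below: poset_retraction R "{c\<in>P. R c x \<and> c \<noteq> x}" f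
    by (rule strictly_below_retraction[OF assms(1)])
  show "f ` {c\<in>P. R c x \<and> c \<noteq> x} \<subseteq> {c\<in>f ` P. R c x \<and> c \<noteq> x}"
    using below.maps_to by blast
  show "{c\<in>f ` P. R c x \<and> c \<noteq> x} \<subseteq> f ` {c\<in>P. R c x \<and> c \<noteq> x}"
    using idem maps_to by (force simp: image_iff)
qed

lemma image_strictly_below_moved:
  assumes "x \<in> P" "f x \<noteq> x"
  shows "f x \<in> f ` {c\<in>P. R c x \<and> c \<noteq> x}"
    and "\<And>c. c \<in> f ` {c\<in>P. R c x \<and> c \<noteq> x} \<Longrightarrow> R c (f x)"
proof -
  have "f x \<in> {c\<in>P. R c x \<and> c \<noteq> x}" using assms maps_to deflationary by blast
  then show "f x \<in> f ` {c\<in>P. R c x \<and> c \<noteq> x}" using idem assms(1) by (metis image_eqI)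
  show "R c (f x)" if "c \<in> f ` {c\<in>P. R c x \<and> c \<noteq> x}" for c
    using that mono assms(1) by blast
qed

end

text \<open>Induction on \<open>P\<close>: the coweighting of \<open>P\<close> agrees with that of \<open>f ` P\<close> at the fixed
  points of \<open>f\<close> and vanishes elsewhere, because the part of \<open>P\<close> strictly below \<open>x\<close> retracts
  onto a cone with apex \<open>f x\<close> when \<open>f x \<noteq> x\<close>.\<close>
lemma poset_euler_char_retraction:
  assumes "finite P" "poset_retraction R P f"
  shows "poset_euler_char R (f ` P) = poset_euler_char R P"
  using assms
proof (induction P rule: finite_psubset_induct)
  case (psubset P)
  interpret poset_retraction R P f by fact
  define Q where "Q = f ` P"
  have finQ: "finite Q" and poQ: "poset R Q"
    unfolding Q_def using psubset.hyps poset_subset[OF poset maps_to] by auto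
  obtain w where w: "coweighting R P w" using coweighting_exists[OF psubset.hyps poset] by blast
  obtain wQ where wQ: "coweighting R Q wQ" using coweighting_exists[OF finQ poQ] by blast
  have "w x = (if f x = x then wQ x else 0)" if x: "x \<in> P" for x
  proof -
    define D where "D = {c\<in>P. R c x \<and> c \<noteq> x}"
    have "D \<subset> P" unfolding D_def using x by blast
    moreover have "finite D" using psubset.hyps unfolding D_def by simp
    ultimately have "poset_euler_char R (f ` D) = poset_euler_char R D"
      using psubset.IH strictly_below_retraction[OF x] unfolding D_def by blast
    also have "\<dots> = 1 - w x"
      unfolding D_def by (rule poset_euler_char_strictly_below[OF psubset.hyps poset w x])
    finally have chi: "poset_euler_char R (f ` D) = 1 - w x" .
    show ?thesis
    proof (cases "f x = x")
      case True
      have "x \<in> Q" unfolding Q_def using x True by (metis image_eqI)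
      then have "poset_euler_char R (f ` D) = 1 - wQ x"
        unfolding D_def image_strictly_below_fixed[OF x True] Q_def[symmetric]
        by (rule poset_euler_char_strictly_below[OF finQ poQ wQ])
      then show ?thesis using chi True by simp
    next
      case False
      have "f ` D \<subseteq> P" unfolding D_def using maps_to by blast
      then have "poset_euler_char R (f ` D) = 1"
        using \<open>finite D\<close> poset_subset[OF poset] image_strictly_below_moved[OF x False]
        unfolding D_def by (intro poset_euler_char_greatest[where m = "f x"]) auto
      then show ?thesis using chi False by simp
    qed
  qed
  then have "poset_euler_char R P = (\<Sum>x\<in>P. if f x = x then wQ x else 0)"
    using poset_euler_char_eq_sum_coweighting[OF psubset.hyps poset w] by simp
  also have "\<dots> = (\<Sum>x\<in>{x\<in>P. f x = x}. wQ x)" using psubset.hyps by (simp add: sum.inter_filter)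
  also have "{x\<in>P. f x = x} = Q" unfolding Q_def using idem maps_to by force
  also have "(\<Sum>x\<in>Q. wQ x) = poset_euler_char R Q"
    by (rule poset_euler_char_eq_sum_coweighting[OF finQ poQ wQ, symmetric])
  finally show ?case unfolding Q_def ..
qed

section \<open>\<open>p\<close>-subgroups, normalizers and quotients\<close>

lemma r_coset_carrier_update [simp]: "H #>\<^bsub>M\<lparr>carrier := S\<rparr>\<^esub> a = H #>\<^bsub>M\<^esub> a"
  by (auto simp: r_coset_def)

lemma (in group_hom) subgroup_vimage:
  assumes "subgroup I H"
  shows "subgroup (carrier G \<inter> h -` I) G"
proof (rule G.subgroupI)
  show "carrier G \<inter> h -` I \<subseteq> carrier G" by blast
  show "carrier G \<inter> h -` I \<noteq> {}" using subgroup.one_closed[OF assms] by auto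
  fix a assume a: "a \<in> carrier G \<inter> h -` I"
  then show "inv a \<in> carrier G \<inter> h -` I" using subgroup.m_inv_closed[OF assms] by auto
  fix b assume "b \<in> carrier G \<inter> h -` I"
  then show "a \<otimes>\<^bsub>G\<^esub> b \<in> carrier G \<inter> h -` I" using a subgroup.m_closed[OF assms] by auto
qed

context group
begin

lemma card_subgroup_dvd:
  assumes "subgroup H G" "subgroup K G" "H \<subseteq> K"
  shows "card H dvd card K"
proof -
  interpret K: group "G\<lparr>carrier := K\<rparr>" using subgroup_imp_group[OF assms(2)] .
  from K.lagrange[OF subgroup_incl[OF assms]] show ?thesis by (simp add: order_def) (metis dvd_triv_right)
qed

lemma prime_power_card_subgroup:
  assumes "Factorial_Ring.prime p" "subgroup H G" "subgroup K G" "H \<subseteq> K" "card K = p ^ k"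
  shows "\<exists>j\<le>k. card H = p ^ j"
  using card_subgroup_dvd[OF assms(2-4)] assms(5) divides_primepow_nat[OF assms(1)] by simp

lemma finite_nonid_p_subgroups:
  assumes "finite (carrier G)"
  shows "finite (nonid_p_subgroups p G)"
proof -
  have "nonid_p_subgroups p G \<subseteq> Pow (carrier G)"
    unfolding nonid_p_subgroups_def p_subgroup_def using subgroup.subset by blast
  then show ?thesis using assms finite_subset by blast
qed

lemma nonid_p_subgroups_subgroup:
  assumes K: "subgroup K G"
  shows "nonid_p_subgroups p (G\<lparr>carrier := K\<rparr>) = {H \<in> nonid_p_subgroups p G. H \<subseteq> K}"
proof -
  have "subgroup H (G\<lparr>carrier := K\<rparr>) \<longleftrightarrow> subgroup H G \<and> H \<subseteq> K" for H
    using incl_subgroup[OF K] subgroup_incl[OF _ K] subgroup.subset[of H "G\<lparr>carrier := K\<rparr>"] by auto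
  then show ?thesis unfolding nonid_p_subgroups_def p_subgroup_def by auto
qed

lemma subgroup_subset_normalizer:
  assumes "subgroup H G"
  shows "H \<subseteq> normalizer G H"
  using subgroup.subset[OF normal.axioms(1)[OF subgroup_in_normalizer[OF assms]]] by simp

lemma normalizer_eq_conj_closed:
  assumes "subgroup H G" "finite H"
  shows "normalizer G H = {g\<in>carrier G. \<forall>h\<in>H. g \<otimes> h \<otimes> inv g \<in> H}"
proof -
  have Hs: "H \<subseteq> carrier G" using assms(1) subgroup.subset by blast
  have "normalizer G H = {g\<in>carrier G. (g <#\<^bsub>G\<^esub> H) #> inv g = H}"
    unfolding normalizer_def stabilizer_def using Hs by auto
  also have "\<dots> = {g\<in>carrier G. \<forall>h\<in>H. g \<otimes> h \<otimes> inv g \<in> H}"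
  proof (intro Collect_cong conj_cong refl)
    fix g assume g: "g \<in> carrier G"
    have conj: "(g <#\<^bsub>G\<^esub> H) #> inv g = (\<lambda>h. g \<otimes> h \<otimes> inv g) ` H"
      unfolding l_coset_def r_coset_def by auto
    have "inj_on (\<lambda>h. g \<otimes> h \<otimes> inv g) H"
      by (rule inj_onI, rule conjugation_is_inj[OF g]) (use Hs in auto)
    then have card: "card ((\<lambda>h. g \<otimes> h \<otimes> inv g) ` H) = card H" by (rule card_image)
    show "(g <#\<^bsub>G\<^esub> H) #> inv g = H \<longleftrightarrow> (\<forall>h\<in>H. g \<otimes> h \<otimes> inv g \<in> H)"
      unfolding conj using card_subset_eq[OF assms(2) _ card] by blast
  qed
  finally show ?thesis .
qed

lemma card_rcosets_image:
  assumes "subgroup H G" "subgroup K G" "H \<subseteq> K"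
  shows "card ((\<lambda>k. H #> k) ` K) * card H = card K"
proof -
  interpret K: group "G\<lparr>carrier := K\<rparr>" by (rule subgroup_imp_group[OF assms(2)])
  have "rcosets\<^bsub>G\<lparr>carrier := K\<rparr>\<^esub> H = (\<lambda>k. H #> k) ` K" unfolding RCOSETS_def by auto
  with K.lagrange[OF subgroup_incl[OF assms]] show ?thesis by (simp add: order_def)
qed

lemma Union_rcosets_image:
  assumes "subgroup H G" "subgroup K G" "H \<subseteq> K"
  shows "\<Union>((\<lambda>k. H #> k) ` K) = K"
proof
  show "\<Union>((\<lambda>k. H #> k) ` K) \<subseteq> K"
    using assms subgroup.m_closed[OF assms(2)] unfolding r_coset_def by blast
  show "K \<subseteq> \<Union>((\<lambda>k. H #> k) ` K)"
    using rcos_self[OF _ assms(1)] subgroup.subset[OF assms(2)] by blast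
qed

lemma group_action_restrict:
  assumes closed: "\<And>g x. g \<in> carrier G \<Longrightarrow> x \<in> E \<Longrightarrow> act g x \<in> E"
    and one: "\<And>x. x \<in> E \<Longrightarrow> act \<one> x = x"
    and mult: "\<And>g h x. g \<in> carrier G \<Longrightarrow> h \<in> carrier G \<Longrightarrow> x \<in> E \<Longrightarrow> act (g \<otimes> h) x = act g (act h x)"
  shows "group_action G E (\<lambda>g. restrict (act g) E)"
proof -
  have bij: "restrict (act g) E \<in> Bij E" if g: "g \<in> carrier G" for g
  proof -
    have "act (inv g) (act g x) = x" "act g (act (inv g) x) = x" if "x \<in> E" for x
      using mult[of "inv g" g x] mult[of g "inv g" x] one[of x] g that by simp_all
    then have "bij_betw (act g) E E"
      using closed g by (intro bij_betwI[where g = "act (inv g)"]) auto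
    then show ?thesis unfolding Bij_def by simp
  qed
  have "(\<lambda>g. restrict (act g) E) \<in> hom G (BijGroup E)"
    unfolding hom_def
  proof (intro CollectI conjI ballI)
    show "(\<lambda>g. restrict (act g) E) \<in> carrier G \<rightarrow> carrier (BijGroup E)"
      using bij by (auto simp: BijGroup_def)
    fix g h assume "g \<in> carrier G" "h \<in> carrier G"
    then show "restrict (act (g \<otimes> h)) E = restrict (act g) E \<otimes>\<^bsub>BijGroup E\<^esub> restrict (act h) E"
      using bij mult closed by (auto simp: BijGroup_def compose_def fun_eq_iff)
  qed
  then show ?thesis
    unfolding group_action_def group_hom_def group_hom_axioms_def
    using group_BijGroup is_group by blast
qed

end

context group_action
begin

lemma card_orbit_prime_power:
  assumes "Factorial_Ring.prime p" "card (carrier G) = p ^ a" "x \<in> E"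
  shows "\<exists>i. card (orbit G \<phi> x) = p ^ i"
proof -
  have "card (orbit G \<phi> x) dvd p ^ a"
    using orbit_stabilizer_theorem[OF assms(3)] assms(2) by (metis dvd_triv_left order_def)
  then show ?thesis using divides_primepow_nat[OF assms(1)] by blast
qed

lemma orbit_eq_singleton_iff:
  assumes "x \<in> E"
  shows "orbit G \<phi> x = {x} \<longleftrightarrow> (\<forall>g\<in>carrier G. \<phi> g x = x)"
  using orbit_refl[OF assms] unfolding orbit_def by auto

lemma singleton_orbits:
  "{Y \<in> orbits G E \<phi>. card Y = 1} = (\<lambda>x. {x}) ` {x\<in>E. \<forall>g\<in>carrier G. \<phi> g x = x}"
proof
  show "{Y \<in> orbits G E \<phi>. card Y = 1} \<subseteq> (\<lambda>x. {x}) ` {x\<in>E. \<forall>g\<in>carrier G. \<phi> g x = x}"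
  proof clarify
    fix Y assume "Y \<in> orbits G E \<phi>" "card Y = 1"
    then obtain x where "x \<in> E" "Y = orbit G \<phi> x" "card (orbit G \<phi> x) = 1"
      unfolding orbits_def by blast
    moreover from this have "orbit G \<phi> x = {x}"
      using orbit_refl by (metis card_1_singletonE singletonD)
    ultimately show "Y \<in> (\<lambda>x. {x}) ` {x\<in>E. \<forall>g\<in>carrier G. \<phi> g x = x}"
      using orbit_eq_singleton_iff by blast
  qed
  show "(\<lambda>x. {x}) ` {x\<in>E. \<forall>g\<in>carrier G. \<phi> g x = x} \<subseteq> {Y \<in> orbits G E \<phi>. card Y = 1}"
    using orbit_eq_singleton_iff unfolding orbits_def by (force simp del: Set.singleton_conv2)
qed

text \<open>The orbits of a \<open>p\<close>-group have \<open>p\<close>-power size, so modulo \<open>p\<close> only the fixed points count.\<close>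
lemma card_fixed_points_mod:
  assumes fin: "finite (carrier G)" "finite E" and p: "Factorial_Ring.prime p"
    and ord: "card (carrier G) = p ^ a"
  shows "card E mod p = card {x\<in>E. \<forall>g\<in>carrier G. \<phi> g x = x} mod p"
proof -
  define Orbs where "Orbs = orbits G E \<phi>"
  have finO: "finite Orbs" unfolding Orbs_def orbits_def using fin(2) by simp
  have orbit_mod: "card Y mod p = (if card Y = 1 then 1 else 0)" if Y: "Y \<in> Orbs" for Y
  proof -
    obtain x where "x \<in> E" "Y = orbit G \<phi> x" using Y unfolding Orbs_def orbits_def by blast
    then obtain i where "card Y = p ^ i" using card_orbit_prime_power[OF p ord] by blast
    then show ?thesis using prime_gt_1_nat[OF p] by (cases i) simp_all
  qed
  have "card E = (\<Sum>Y\<in>Orbs. card Y)"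
    unfolding Orbs_def using disjoint_sum[OF fin(2), of "\<lambda>_. 1::nat"] by simp
  then have "card E mod p = (\<Sum>Y\<in>Orbs. card Y mod p) mod p" by (simp add: mod_sum_eq)
  also have "(\<Sum>Y\<in>Orbs. card Y mod p) = card {Y\<in>Orbs. card Y = 1}"
    using orbit_mod finO by (simp add: sum.If_cases Int_def)
  also have "\<dots> = card {x\<in>E. \<forall>g\<in>carrier G. \<phi> g x = x}"
    unfolding Orbs_def singleton_orbits by (simp add: card_image)
  finally show ?thesis .
qed

end

context group
begin

text \<open>Right multiplication by \<open>h\<inverse>\<close>, so that this is a left action.\<close>
lemma rcosets_image_action:
  assumes H: "subgroup H G" and K: "subgroup K G" and HK: "H \<subseteq> K"
  shows "group_action (G\<lparr>carrier := H\<rparr>) ((\<lambda>k. H #> k) ` K)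
           (\<lambda>h. restrict (\<lambda>Hk. Hk #> inv h) ((\<lambda>k. H #> k) ` K))"
proof -
  interpret H: group "G\<lparr>carrier := H\<rparr>" by (rule subgroup_imp_group[OF H])
  have Hs: "H \<subseteq> carrier G" and Ks: "K \<subseteq> carrier G" using H K subgroup.subset by auto
  show ?thesis
  proof (rule H.group_action_restrict)
    fix h Hk assume "h \<in> carrier (G\<lparr>carrier := H\<rparr>)" "Hk \<in> (\<lambda>k. H #> k) ` K"
    then obtain k where k: "h \<in> K" "k \<in> K" "Hk = H #> k" using HK by auto
    have "k \<in> carrier G" "inv h \<in> carrier G" using k Ks by auto
    then have "Hk #> inv h = H #> (k \<otimes> inv h)" using k(3) coset_mult_assoc[OF Hs] by simp
    moreover have "k \<otimes> inv h \<in> K" using k subgroup.m_inv_closed[OF K] subgroup.m_closed[OF K] by blast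
    ultimately show "Hk #> inv h \<in> (\<lambda>k. H #> k) ` K" by blast
  next
    fix Hk assume "Hk \<in> (\<lambda>k. H #> k) ` K"
    then show "Hk #> inv \<one>\<^bsub>G\<lparr>carrier := H\<rparr>\<^esub> = Hk"
      using coset_mult_one r_coset_subset_G[OF Hs] Ks by auto
  next
    fix g h Hk assume gh: "g \<in> carrier (G\<lparr>carrier := H\<rparr>)" "h \<in> carrier (G\<lparr>carrier := H\<rparr>)"
      and "Hk \<in> (\<lambda>k. H #> k) ` K"
    then have "Hk \<subseteq> carrier G" "g \<in> carrier G" "h \<in> carrier G"
      using r_coset_subset_G[OF Hs] Ks Hs by auto
    then show "Hk #> inv (g \<otimes>\<^bsub>G\<lparr>carrier := H\<rparr>\<^esub> h) = Hk #> inv h #> inv g"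
      by (simp add: inv_mult_group coset_mult_assoc)
  qed
qed

lemma fixed_rcoset_imp_normalizer:
  assumes H: "subgroup H G" "finite H" and x: "x \<in> carrier G"
    and fixed: "\<And>h. h \<in> H \<Longrightarrow> H #> x #> h = H #> x"
  shows "x \<in> normalizer G H"
proof -
  have Hs: "H \<subseteq> carrier G" using H subgroup.subset by blast
  have "x \<otimes> h \<otimes> inv x \<in> H" if h: "h \<in> H" for h
  proof -
    have "H #> x = H #> (x \<otimes> h)" using fixed[OF h] coset_mult_assoc[OF Hs x] h Hs by auto
    then have "x \<otimes> h \<in> H #> x" using repr_independenceD[OF H(1)] x h Hs by blast
    then show ?thesis by (rule subgroup.rcos_module_imp[OF H(1) is_group x])
  qed
  then show ?thesis using normalizer_eq_conj_closed[OF H] x by blast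
qed

text \<open>The fixed points of \<open>H\<close> on \<open>H\<backslash>K\<close> are congruent modulo \<open>p\<close> to \<open>|K : H| \<equiv> 0\<close>.\<close>
lemma p_dvd_card_fixed_rcosets:
  assumes fin: "finite (carrier G)" and p: "Factorial_Ring.prime p"
    and H: "subgroup H G" and K: "subgroup K G" and HK: "H \<subset> K" and cK: "card K = p ^ k"
  shows "p dvd card {Hk \<in> (\<lambda>k. H #> k) ` K. \<forall>h\<in>H. Hk #> inv h = Hk}"
proof -
  define E where "E = (\<lambda>k. H #> k) ` K"
  have Hs: "H \<subseteq> carrier G" and Ks: "K \<subseteq> carrier G" using H K subgroup.subset by auto
  have finH: "finite H" and finK: "finite K" using fin Hs Ks finite_subset by auto
  obtain a where a: "card H = p ^ a" "a \<le> k" using prime_power_card_subgroup[OF p H K _ cK] HK by blast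
  interpret action: group_action "G\<lparr>carrier := H\<rparr>" E "\<lambda>h. restrict (\<lambda>Hk. Hk #> inv h) E"
    unfolding E_def using rcosets_image_action[OF H K] HK by blast
  have "card E * p ^ a = p ^ (k - a) * p ^ a"
    using card_rcosets_image[OF H K] HK a cK unfolding E_def by (simp add: power_add[symmetric])
  then have "card E = p ^ (k - a)" using prime_gt_0_nat[OF p] by simp
  moreover have "a < k" using psubset_card_mono[OF finK HK] a cK prime_gt_1_nat[OF p] by simp
  ultimately have "p dvd card E" by simp
  moreover have "card E mod p = card {Hk \<in> E. \<forall>h\<in>H. Hk #> inv h = Hk} mod p"
  proof -
    have "{Hk \<in> E. \<forall>h\<in>H. Hk #> inv h = Hk}
        = {Hk \<in> E. \<forall>h\<in>carrier (G\<lparr>carrier := H\<rparr>). restrict (\<lambda>Hk. Hk #> inv h) E Hk = Hk}"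
      by auto
    then show ?thesis
      using action.card_fixed_points_mod[OF _ _ p, of a] finH a finK unfolding E_def by simp
  qed
  ultimately show ?thesis unfolding E_def by (simp add: dvd_eq_mod_eq_0)
qed

text \<open>Normalizers grow in \<open>p\<close>-groups: the coset \<open>H\<close> is fixed, so there is a second fixed coset.\<close>
lemma normalizer_grows:
  assumes fin: "finite (carrier G)" and p: "Factorial_Ring.prime p"
    and H: "subgroup H G" and K: "subgroup K G" and HK: "H \<subset> K" and cK: "card K = p ^ k"
  shows "\<exists>x\<in>K. x \<notin> H \<and> x \<in> normalizer G H"
proof -
  define F where "F = {Hk \<in> (\<lambda>k. H #> k) ` K. \<forall>h\<in>H. Hk #> inv h = Hk}"
  have Hs: "H \<subseteq> carrier G" and Ks: "K \<subseteq> carrier G" using H K subgroup.subset by auto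
  have "H #> \<one> \<in> (\<lambda>k. H #> k) ` K" using subgroup.one_closed[OF K] by blast
  then have "H \<in> F"
    unfolding F_def using coset_mult_one[OF Hs] subgroup.rcos_const[OF H is_group]
      subgroup.m_inv_closed[OF H] by auto
  moreover have "finite K" using fin Ks finite_subset by blast
  then have "finite F" unfolding F_def by simp
  ultimately have "card F > 0" by (auto simp: card_gt_0_iff)
  then have "p \<le> card F" using p_dvd_card_fixed_rcosets[OF fin p H K HK cK] F_def dvd_imp_le by blast
  then have "\<not> F \<subseteq> {H}" using prime_ge_2_nat[OF p] card_mono[of "{H}" F] by auto
  then obtain x where x: "x \<in> K" "H #> x \<in> F" "H #> x \<noteq> H" unfolding F_def by blast
  have "x \<notin> H" using x(3) subgroup.rcos_const[OF H is_group] by blast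
  moreover have "x \<in> normalizer G H"
  proof (rule fixed_rcoset_imp_normalizer[OF H])
    show "finite H" using fin Hs finite_subset by blast
    show "x \<in> carrier G" using x Ks by blast
    fix h assume h: "h \<in> H"
    have "H #> x #> inv (inv h) = H #> x" using x(2) subgroup.m_inv_closed[OF H h] unfolding F_def by blast
    then show "H #> x #> h = H #> x" using h Hs by auto
  qed
  ultimately show ?thesis using x by blast
qed

lemma normalizer_quotient_hom:
  assumes "subgroup H G"
  shows "group_hom (G\<lparr>carrier := normalizer G H\<rparr>) (G\<lparr>carrier := normalizer G H\<rparr> Mod H) (\<lambda>a. H #> a)"
proof -
  have nor: "H \<lhd> G\<lparr>carrier := normalizer G H\<rparr>" by (rule subgroup_in_normalizer[OF assms])
  have "(\<lambda>a. H #>\<^bsub>G\<lparr>carrier := normalizer G H\<rparr>\<^esub> a)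
      \<in> hom (G\<lparr>carrier := normalizer G H\<rparr>) (G\<lparr>carrier := normalizer G H\<rparr> Mod H)"
    by (rule normal.r_coset_hom_Mod[OF nor])
  then have "group_hom_axioms (G\<lparr>carrier := normalizer G H\<rparr>) (G\<lparr>carrier := normalizer G H\<rparr> Mod H) (\<lambda>a. H #> a)"
    unfolding group_hom_axioms_def by simp
  with normal.axioms(2)[OF nor] normal.factorgroup_is_group[OF nor] show ?thesis
    by (rule group_hom.intro)
qed

lemma subgroup_rcosets_image_normalizer_quotient:
  assumes H: "subgroup H G" and K: "subgroup K G" and KN: "K \<subseteq> normalizer G H"
  shows "subgroup ((\<lambda>k. H #> k) ` K) (G\<lparr>carrier := normalizer G H\<rparr> Mod H)"
proof -
  have "subgroup (normalizer G H) G" using normalizer_imp_subgroup subgroup.subset[OF H] by blast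
  with K KN show ?thesis
    using group_hom.subgroup_img_is_subgroup[OF normalizer_quotient_hom[OF H] subgroup_incl] by blast
qed

lemma normalizer_quotient_subgroup_preimage:
  assumes H: "subgroup H G" and Y: "subgroup Y (G\<lparr>carrier := normalizer G H\<rparr> Mod H)"
  shows "subgroup {g \<in> normalizer G H. H #> g \<in> Y} G"
    and "H \<subseteq> {g \<in> normalizer G H. H #> g \<in> Y}"
    and "(\<lambda>k. H #> k) ` {g \<in> normalizer G H. H #> g \<in> Y} = Y"
proof -
  interpret hom: group_hom "G\<lparr>carrier := normalizer G H\<rparr>" "G\<lparr>carrier := normalizer G H\<rparr> Mod H" "\<lambda>a. H #> a"
    by (rule normalizer_quotient_hom[OF H])
  have N: "subgroup (normalizer G H) G" using normalizer_imp_subgroup subgroup.subset[OF H] by blast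
  have "{g \<in> normalizer G H. H #> g \<in> Y} = carrier (G\<lparr>carrier := normalizer G H\<rparr>) \<inter> (\<lambda>a. H #> a) -` Y"
    by auto
  then show "subgroup {g \<in> normalizer G H. H #> g \<in> Y} G"
    using incl_subgroup[OF N hom.subgroup_vimage[OF Y]] by (simp only:)
  have "H \<in> Y" using subgroup.one_closed[OF Y] by (simp only: one_FactGroup)
  then show "H \<subseteq> {g \<in> normalizer G H. H #> g \<in> Y}"
    using subgroup_subset_normalizer[OF H] subgroup.rcos_const[OF H is_group] by auto
  have "carrier (G\<lparr>carrier := normalizer G H\<rparr> Mod H) = (\<lambda>k. H #> k) ` normalizer G H"
    by (simp add: carrier_FactGroup)
  then have Y_sub: "Y \<subseteq> (\<lambda>k. H #> k) ` normalizer G H" using subgroup.subset[OF Y] by (simp only:)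
  show "(\<lambda>k. H #> k) ` {g \<in> normalizer G H. H #> g \<in> Y} = Y"
  proof (intro equalityI subsetI)
    fix y assume "y \<in> Y"
    moreover from this obtain g where "g \<in> normalizer G H" "y = H #> g" using Y_sub by auto
    ultimately show "y \<in> (\<lambda>k. H #> k) ` {g \<in> normalizer G H. H #> g \<in> Y}" by auto
  qed auto
qed

lemma rcosets_image_mem_nonid_p_subgroups:
  assumes p: "Factorial_Ring.prime p" and H: "subgroup H G"
    and K: "K \<in> nonid_p_subgroups p G" "H \<subset> K" "K \<subseteq> normalizer G H"
  shows "(\<lambda>k. H #> k) ` K \<in> nonid_p_subgroups p (G\<lparr>carrier := normalizer G H\<rparr> Mod H)"
proof -
  obtain j where K1: "subgroup K G" "card K = p ^ j"
    using K(1) unfolding nonid_p_subgroups_def p_subgroup_def by auto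
  have "card ((\<lambda>k. H #> k) ` K) * card H = p ^ j"
    using card_rcosets_image[OF H K1(1) psubset_imp_subset[OF K(2)]] K1(2) by simp
  then have "card ((\<lambda>k. H #> k) ` K) dvd p ^ j" by (metis dvd_triv_left)
  then have "\<exists>i. card ((\<lambda>k. H #> k) ` K) = p ^ i" using divides_primepow_nat[OF p] by blast
  moreover have "(\<lambda>k. H #> k) ` K \<noteq> {H}"
  proof
    assume "(\<lambda>k. H #> k) ` K = {H}"
    then have "K = H" using Union_rcosets_image[OF H K1(1) psubset_imp_subset[OF K(2)]] by simp
    then show False using K(2) by simp
  qed
  moreover note subgroup_rcosets_image_normalizer_quotient[OF H K1(1) K(3)]
  ultimately show ?thesis
    unfolding nonid_p_subgroups_def p_subgroup_def one_FactGroup mem_Collect_eq by (intro conjI)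
qed

lemma quotient_preimage_mem_nonid_p_subgroups:
  assumes H: "H \<in> nonid_p_subgroups p G" and Y: "Y \<in> nonid_p_subgroups p (G\<lparr>carrier := normalizer G H\<rparr> Mod H)"
  shows "{g \<in> normalizer G H. H #> g \<in> Y} \<in> {K \<in> nonid_p_subgroups p G. H \<subset> K \<and> K \<subseteq> normalizer G H}"
proof -
  define K where "K = {g \<in> normalizer G H. H #> g \<in> Y}"
  have H1: "subgroup H G" "H \<noteq> {\<one>}" and "\<exists>a. card H = p ^ a"
    using H unfolding nonid_p_subgroups_def p_subgroup_def by auto
  have Y1: "subgroup Y (G\<lparr>carrier := normalizer G H\<rparr> Mod H)" "Y \<noteq> {H}" and "\<exists>i. card Y = p ^ i"
    using Y unfolding nonid_p_subgroups_def p_subgroup_def by auto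
  note preimage = normalizer_quotient_subgroup_preimage[OF H1(1) Y1(1), folded K_def]
  have "card K = card Y * card H"
    using card_rcosets_image[OF H1(1) preimage(1,2)] preimage(3) by simp
  then have "\<exists>k. card K = p ^ k"
    using \<open>\<exists>a. card H = p ^ a\<close> \<open>\<exists>i. card Y = p ^ i\<close> by (metis power_add)
  moreover have "K \<noteq> H"
    using preimage(3) Y1(2) subgroup.rcos_const[OF H1(1) is_group] subgroup.one_closed[OF H1(1)] by auto
  moreover have "K \<noteq> {\<one>}" using preimage(2) H1(2) subgroup.one_closed[OF H1(1)] by auto
  moreover have "K \<subseteq> normalizer G H" unfolding K_def by blast
  ultimately show ?thesis
    using preimage(1,2) unfolding K_def[symmetric] nonid_p_subgroups_def p_subgroup_def by auto
qed

text \<open>The correspondence theorem, restricted to \<open>p\<close>-subgroups.\<close>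
lemma bij_betw_rcosets_image_nonid_p_subgroups:
  assumes p: "Factorial_Ring.prime p" and H: "H \<in> nonid_p_subgroups p G"
  shows "bij_betw (\<lambda>K. (\<lambda>k. H #> k) ` K) {K \<in> nonid_p_subgroups p G. H \<subset> K \<and> K \<subseteq> normalizer G H}
           (nonid_p_subgroups p (G\<lparr>carrier := normalizer G H\<rparr> Mod H))"
proof (rule bij_betwI[where g = "\<lambda>Y. {g \<in> normalizer G H. H #> g \<in> Y}"])
  have H1: "subgroup H G" using H unfolding nonid_p_subgroups_def p_subgroup_def by auto
  show "(\<lambda>K. (\<lambda>k. H #> k) ` K) \<in> {K \<in> nonid_p_subgroups p G. H \<subset> K \<and> K \<subseteq> normalizer G H}
      \<rightarrow> nonid_p_subgroups p (G\<lparr>carrier := normalizer G H\<rparr> Mod H)"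
    using rcosets_image_mem_nonid_p_subgroups[OF p H1] by blast
  show "(\<lambda>Y. {g \<in> normalizer G H. H #> g \<in> Y}) \<in> nonid_p_subgroups p (G\<lparr>carrier := normalizer G H\<rparr> Mod H)
      \<rightarrow> {K \<in> nonid_p_subgroups p G. H \<subset> K \<and> K \<subseteq> normalizer G H}"
    using quotient_preimage_mem_nonid_p_subgroups[OF H] by blast
  show "(\<lambda>k. H #> k) ` {g \<in> normalizer G H. H #> g \<in> Y} = Y"
    if "Y \<in> nonid_p_subgroups p (G\<lparr>carrier := normalizer G H\<rparr> Mod H)" for Y
  proof -
    have "subgroup Y (G\<lparr>carrier := normalizer G H\<rparr> Mod H)"
      using that unfolding nonid_p_subgroups_def p_subgroup_def by simp
    then show ?thesis by (rule normalizer_quotient_subgroup_preimage(3)[OF H1])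
  qed
  show "{g \<in> normalizer G H. H #> g \<in> (\<lambda>k. H #> k) ` K} = K"
    if K: "K \<in> {K \<in> nonid_p_subgroups p G. H \<subset> K \<and> K \<subseteq> normalizer G H}" for K
  proof -
    have K1: "subgroup K G" using K unfolding nonid_p_subgroups_def p_subgroup_def by auto
    have "g \<in> K" if g: "g \<in> normalizer G H" "H #> g \<in> (\<lambda>k. H #> k) ` K" for g
    proof -
      have "normalizer G H \<subseteq> carrier G"
        using subgroup.subset[OF normalizer_imp_subgroup[OF subgroup.subset[OF H1]]] .
      then have "g \<in> H #> g" using rcos_self[OF _ H1] g(1) by blast
      then have "g \<in> \<Union>((\<lambda>k. H #> k) ` K)" using g(2) by blast
      then show ?thesis using Union_rcosets_image[OF H1 K1] K by auto
    qed
    then show ?thesis using K by blast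
  qed
qed

lemma chi_S_normalizer_quotient_eq_between:
  assumes fin: "finite (carrier G)" and p: "Factorial_Ring.prime p" and H: "H \<in> nonid_p_subgroups p G"
  shows "chi_S p (G\<lparr>carrier := normalizer G H\<rparr> Mod H)
       = poset_euler_char (\<subseteq>) {K \<in> nonid_p_subgroups p G. H \<subset> K \<and> K \<subseteq> normalizer G H}"
proof -
  let ?T = "{K \<in> nonid_p_subgroups p G. H \<subset> K \<and> K \<subseteq> normalizer G H}"
  have H1: "subgroup H G" using H unfolding nonid_p_subgroups_def p_subgroup_def by auto
  note bij = bij_betw_rcosets_image_nonid_p_subgroups[OF p H]
  have finT: "finite ?T" using finite_nonid_p_subgroups[OF fin] by simp
  then have finQ: "finite (nonid_p_subgroups p (G\<lparr>carrier := normalizer G H\<rparr> Mod H))"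
    using bij_betw_finite[OF bij] by simp
  have iso: "K \<subseteq> K' \<longleftrightarrow> (\<lambda>k. H #> k) ` K \<subseteq> (\<lambda>k. H #> k) ` K'"
    if "K \<in> ?T" "K' \<in> ?T" for K K'
  proof
    assume "(\<lambda>k. H #> k) ` K \<subseteq> (\<lambda>k. H #> k) ` K'"
    then have "\<Union>((\<lambda>k. H #> k) ` K) \<subseteq> \<Union>((\<lambda>k. H #> k) ` K')" by (rule Union_mono)
    moreover have "subgroup K G" "H \<subseteq> K" "subgroup K' G" "H \<subseteq> K'"
      using that unfolding nonid_p_subgroups_def p_subgroup_def by auto
    ultimately show "K \<subseteq> K'" using Union_rcosets_image[OF H1] by simp
  qed (rule image_mono)
  have "poset_euler_char (\<subseteq>) ?T = poset_euler_char (\<subseteq>) (nonid_p_subgroups p (G\<lparr>carrier := normalizer G H\<rparr> Mod H))"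
    by (rule poset_euler_char_iso[OF finT poset_subseteq finQ poset_subseteq bij iso])
  then show ?thesis unfolding chi_S_def by simp
qed

lemma inter_normalizer_mem_nonid_p_subgroups:
  assumes fin: "finite (carrier G)" and p: "Factorial_Ring.prime p" and H: "subgroup H G"
    and K: "K \<in> nonid_p_subgroups p G" "H \<subset> K"
  shows "K \<inter> normalizer G H \<in> {K \<in> nonid_p_subgroups p G. H \<subset> K \<and> K \<subseteq> normalizer G H}"
proof -
  define N where "N = normalizer G H"
  obtain j where K1: "subgroup K G" "card K = p ^ j"
    using K unfolding nonid_p_subgroups_def p_subgroup_def by auto
  have "subgroup N G" unfolding N_def using normalizer_imp_subgroup subgroup.subset[OF H] by blast
  then have KN: "subgroup (K \<inter> N) G" by (rule subgroups_Inter_pair[OF K1(1)])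
  have "H \<subseteq> N" unfolding N_def by (rule subgroup_subset_normalizer[OF H])
  then have HKN: "H \<subset> K \<inter> N"
    using normalizer_grows[OF fin p H K1(1) K(2) K1(2)] K(2) unfolding N_def[symmetric] by blast
  obtain i where "card (K \<inter> N) = p ^ i" using prime_power_card_subgroup[OF p KN K1(1) _ K1(2)] by blast
  moreover note HKN
  moreover have "K \<inter> N \<noteq> {\<one>}"
  proof
    assume "K \<inter> N = {\<one>}"
    then have "H = {\<one>}" using HKN subgroup.one_closed[OF H] by blast
    then show False using HKN \<open>K \<inter> N = {\<one>}\<close> by simp
  qed
  ultimately have "K \<inter> N \<in> {K \<in> nonid_p_subgroups p G. H \<subset> K \<and> K \<subseteq> N}"
    using KN unfolding nonid_p_subgroups_def p_subgroup_def by blast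
  then show ?thesis unfolding N_def .
qed

text \<open>\<open>K \<mapsto> K \<inter> N\<^sub>G(H)\<close> retracts the \<open>p\<close>-subgroups above \<open>H\<close> onto those inside \<open>N\<^sub>G(H)\<close>.\<close>
lemma chi_S_normalizer_quotient:
  assumes fin: "finite (carrier G)" and p: "Factorial_Ring.prime p" and H: "H \<in> nonid_p_subgroups p G"
  shows "chi_S p (G\<lparr>carrier := normalizer G H\<rparr> Mod H)
       = poset_euler_char (\<subseteq>) {K \<in> nonid_p_subgroups p G. H \<subset> K}"
proof -
  define N where "N = normalizer G H"
  define P where "P = {K \<in> nonid_p_subgroups p G. H \<subset> K}"
  have H1: "subgroup H G" using H unfolding nonid_p_subgroups_def p_subgroup_def by auto
  have into: "K \<inter> N \<in> {K \<in> nonid_p_subgroups p G. H \<subset> K \<and> K \<subseteq> N}" if "K \<in> P" for K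
  proof -
    have "K \<in> nonid_p_subgroups p G" "H \<subset> K" using that unfolding P_def by auto
    from inter_normalizer_mem_nonid_p_subgroups[OF fin p H1 this] show ?thesis unfolding N_def .
  qed
  have "(\<lambda>K. K \<inter> N) ` P = {K \<in> nonid_p_subgroups p G. H \<subset> K \<and> K \<subseteq> N}"
  proof
    show "(\<lambda>K. K \<inter> N) ` P \<subseteq> {K \<in> nonid_p_subgroups p G. H \<subset> K \<and> K \<subseteq> N}" using into by blast
    show "{K \<in> nonid_p_subgroups p G. H \<subset> K \<and> K \<subseteq> N} \<subseteq> (\<lambda>K. K \<inter> N) ` P"
    proof
      fix K assume "K \<in> {K \<in> nonid_p_subgroups p G. H \<subset> K \<and> K \<subseteq> N}"
      then have "K \<in> P" "K = K \<inter> N" unfolding P_def by auto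
      then show "K \<in> (\<lambda>K. K \<inter> N) ` P" by blast
    qed
  qed
  moreover have "poset_retraction (\<subseteq>) P (\<lambda>K. K \<inter> N)"
  proof
    show "(\<lambda>K. K \<inter> N) ` P \<subseteq> P" using into unfolding P_def by blast
  qed (use poset_subseteq in auto)
  moreover have "finite P" unfolding P_def using finite_nonid_p_subgroups[OF fin] by simp
  ultimately have "poset_euler_char (\<subseteq>) {K \<in> nonid_p_subgroups p G. H \<subset> K \<and> K \<subseteq> N} = poset_euler_char (\<subseteq>) P"
    using poset_euler_char_retraction by metis
  then show ?thesis
    using chi_S_normalizer_quotient_eq_between[OF fin p H] unfolding N_def P_def by simp
qed

section \<open>The Moebius function of the subgroup lattice\<close>

lemma sum_subgroup_mu_below:
  assumes fin: "finite (carrier G)" and K: "subgroup K G"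
  shows "(\<Sum>H\<in>{H. subgroup H G \<and> H \<subseteq> K}. subgroup_mu G H) = (if K = {\<one>} then 1 else 0)"
proof -
  have finSub: "finite {H. subgroup H G}"
    using fin subgroup.subset by (auto intro: finite_subset[of _ "Pow (carrier G)"])
  have "(\<Sum>H\<in>{H. subgroup H G}. subgroup_mu G H * (if H \<subseteq> K then 1 else 0)) = (if {\<one>} = K then 1 else 0)"
    using zeta_left_inverse_poset_mobius[OF finSub poset_subseteq] triv_subgroup K
    unfolding zeta_left_inverse_def subgroup_mu_def by blast
  moreover have "(\<Sum>H\<in>{H. subgroup H G \<and> H \<subseteq> K}. subgroup_mu G H)
      = (\<Sum>H\<in>{H. subgroup H G}. if H \<subseteq> K then subgroup_mu G H else 0)"
    using sum.inter_filter[OF finSub, of "subgroup_mu G" "\<lambda>H. H \<subseteq> K"] by simp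
  moreover have "\<dots> = (\<Sum>H\<in>{H. subgroup H G}. subgroup_mu G H * (if H \<subseteq> K then 1 else 0))"
    by (rule sum.cong) auto
  ultimately show ?thesis by auto
qed

lemma subgroup_mu_trivial:
  assumes "finite (carrier G)"
  shows "subgroup_mu G {\<one>} = 1"
proof -
  have "{H. subgroup H G \<and> H \<subseteq> {\<one>}} = {{\<one>}}" using triv_subgroup subgroup.one_closed by blast
  then show ?thesis using sum_subgroup_mu_below[OF assms triv_subgroup] by simp
qed

lemma subgroups_below_p_subgroup:
  assumes p: "Factorial_Ring.prime p" and K: "K \<in> nonid_p_subgroups p G"
  shows "{H. subgroup H G \<and> H \<subseteq> K} = insert {\<one>} {H \<in> nonid_p_subgroups p G. H \<subseteq> K}"
proof -
  obtain k where K1: "subgroup K G" "card K = p ^ k"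
    using K unfolding nonid_p_subgroups_def p_subgroup_def by auto
  then have "\<exists>j. card H = p ^ j" if "subgroup H G" "H \<subseteq> K" for H
    using prime_power_card_subgroup[OF p that(1) K1(1) that(2) K1(2)] by blast
  then show ?thesis
    using triv_subgroup subgroup.one_closed \<open>subgroup K G\<close>
    unfolding nonid_p_subgroups_def p_subgroup_def by blast
qed

text \<open>The defining recursion of \<open>\<mu>\<close>, read off below a nonidentity \<open>p\<close>-subgroup, where all
  subgroups are \<open>p\<close>-subgroups.\<close>
lemma coweighting_neg_subgroup_mu:
  assumes fin: "finite (carrier G)" and p: "Factorial_Ring.prime p"
  shows "coweighting (\<subseteq>) (nonid_p_subgroups p G) (\<lambda>H. - subgroup_mu G H)"
  unfolding coweighting_def
proof
  fix K assume K: "K \<in> nonid_p_subgroups p G"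
  then have "subgroup K G" "K \<noteq> {\<one>}" unfolding nonid_p_subgroups_def p_subgroup_def by auto
  moreover have "{\<one>} \<notin> {H \<in> nonid_p_subgroups p G. H \<subseteq> K}" unfolding nonid_p_subgroups_def by blast
  moreover have "finite {H \<in> nonid_p_subgroups p G. H \<subseteq> K}" using finite_nonid_p_subgroups[OF fin] by simp
  ultimately have "0 = subgroup_mu G {\<one>} + (\<Sum>H\<in>{H \<in> nonid_p_subgroups p G. H \<subseteq> K}. subgroup_mu G H)"
    using sum_subgroup_mu_below[OF fin \<open>subgroup K G\<close>] unfolding subgroups_below_p_subgroup[OF p K]
    by simp
  then have "1 + (\<Sum>H\<in>{H \<in> nonid_p_subgroups p G. H \<subseteq> K}. subgroup_mu G H) = 0"
    using subgroup_mu_trivial[OF fin] by simp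
  then show "(\<Sum>H\<in>{H \<in> nonid_p_subgroups p G. H \<subseteq> K}. - subgroup_mu G H) = 1"
    by (simp add: sum_negf)
qed

lemma poset_euler_char_nonid_p_subgroups:
  assumes fin: "finite (carrier G)" and p: "Factorial_Ring.prime p"
  shows "poset_euler_char (\<subseteq>) (nonid_p_subgroups p G) = - (\<Sum>H\<in>nonid_p_subgroups p G. subgroup_mu G H)"
  using poset_euler_char_eq_sum_coweighting[OF finite_nonid_p_subgroups[OF fin] poset_subseteq
      coweighting_neg_subgroup_mu[OF fin p]]
  by (simp add: sum_negf)

lemma weighting_nonid_p_subgroups_eq:
  assumes fin: "finite (carrier G)" and p: "Factorial_Ring.prime p"
    and v: "coweighting (\<lambda>H K. K \<subseteq> H) (nonid_p_subgroups p G) v" and H: "H \<in> nonid_p_subgroups p G"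
  shows "v H = 1 - chi_S p (G\<lparr>carrier := normalizer G H\<rparr> Mod H)"
proof -
  let ?S = "nonid_p_subgroups p G"
  have finS: "finite ?S" by (rule finite_nonid_p_subgroups[OF fin])
  have "poset_euler_char (\<lambda>H K. K \<subseteq> H) {K \<in> ?S. H \<subseteq> K \<and> K \<noteq> H} = 1 - v H"
    using poset_euler_char_strictly_below[OF finS poset_converse[OF poset_subseteq] v H] by simp
  moreover have "{K \<in> ?S. H \<subseteq> K \<and> K \<noteq> H} = {K \<in> ?S. H \<subset> K}" by blast
  moreover have "poset_euler_char (\<lambda>H K. K \<subseteq> H) {K \<in> ?S. H \<subset> K} = poset_euler_char (\<subseteq>) {K \<in> ?S. H \<subset> K}"
    using finS by (intro poset_euler_char_converse poset_subseteq) simp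
  ultimately show ?thesis using chi_S_normalizer_quotient[OF fin p H] by simp
qed


section \<open>The three identities\<close>

lemma sum_normalizer_quotients_eq_zero:
  assumes fin: "finite (carrier G)" and p: "Factorial_Ring.prime p"
  shows "(\<Sum>H\<in>nonid_p_subgroups p G.
            1 - chi_S p (G\<lparr>carrier := normalizer G H\<rparr> Mod H) + subgroup_mu G H) = 0"
proof -
  let ?S = "nonid_p_subgroups p G"
  have finS: "finite ?S" by (rule finite_nonid_p_subgroups[OF fin])
  obtain v where v: "coweighting (\<lambda>H K. K \<subseteq> H) ?S v"
    using coweighting_exists[OF finS poset_converse[OF poset_subseteq]] by blast
  have "(\<Sum>H\<in>?S. 1 - chi_S p (G\<lparr>carrier := normalizer G H\<rparr> Mod H) + subgroup_mu G H)
      = (\<Sum>H\<in>?S. v H + subgroup_mu G H)"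
    using weighting_nonid_p_subgroups_eq[OF fin p v] by (intro sum.cong) auto
  also have "\<dots> = poset_euler_char (\<subseteq>) ?S + (\<Sum>H\<in>?S. subgroup_mu G H)"
    using poset_euler_char_eq_sum_weighting[OF finS poset_subseteq v] by (simp add: sum.distrib)
  finally show ?thesis using poset_euler_char_nonid_p_subgroups[OF fin p] by simp
qed

lemma sum_weighting_containing:
  assumes p: "Factorial_Ring.prime p" and v: "coweighting (\<lambda>H K. K \<subseteq> H) (nonid_p_subgroups p G) v"
    and g: "g \<in> carrier G" "g \<noteq> \<one>"
  shows "(\<Sum>H\<in>{H \<in> nonid_p_subgroups p G. g \<in> H}. v H)
       = (if generate G {g} \<in> nonid_p_subgroups p G then 1 else 0)"
proof -
  let ?S = "nonid_p_subgroups p G"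
  have gen: "subgroup (generate G {g}) G" using generate_is_subgroup g(1) by simp
  have eq: "{H \<in> ?S. g \<in> H} = {H \<in> ?S. generate G {g} \<subseteq> H}"
    using generate_subgroup_incl[of "{g}"] generate.incl[of g "{g}" G]
    unfolding nonid_p_subgroups_def p_subgroup_def by (blast dest: subgroup.subset)
  have empty: "{H \<in> ?S. generate G {g} \<subseteq> H} = {}" if "generate G {g} \<notin> ?S"
  proof (rule ccontr)
    assume "{H \<in> ?S. generate G {g} \<subseteq> H} \<noteq> {}"
    then obtain H k where H: "subgroup H G" "generate G {g} \<subseteq> H" "card H = p ^ k"
      unfolding nonid_p_subgroups_def p_subgroup_def by blast
    then obtain j where "card (generate G {g}) = p ^ j"
      using prime_power_card_subgroup[OF p gen H(1,2,3)] by blast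
    moreover have "generate G {g} \<noteq> {\<one>}" using generate.incl[of g "{g}" G] g(2) by blast
    ultimately show False using that gen unfolding nonid_p_subgroups_def p_subgroup_def by blast
  qed
  show ?thesis
  proof (cases "generate G {g} \<in> ?S")
    case True
    then show ?thesis using bspec[OF v[unfolded coweighting_def] True] unfolding eq by simp
  next
    case False
    then show ?thesis unfolding eq empty[OF False] by simp
  qed
qed

text \<open>Double counting the pairs \<open>(g, H)\<close> with \<open>g \<in> H\<close>: the identity contributes the total mass of
  the weighting, and any other \<open>g\<close> contributes \<open>1\<close> precisely when \<open>\<langle>g\<rangle>\<close> is a \<open>p\<close>-subgroup.\<close>
lemma sum_weighting_mult_card:
  assumes fin: "finite (carrier G)" and p: "Factorial_Ring.prime p"
    and v: "coweighting (\<lambda>H K. K \<subseteq> H) (nonid_p_subgroups p G) v"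
  shows "(\<Sum>H\<in>nonid_p_subgroups p G. v H * int (card H))
       = poset_euler_char (\<subseteq>) (nonid_p_subgroups p G)
         + int (card {g \<in> carrier G. generate G {g} \<in> nonid_p_subgroups p G})"
proof -
  let ?S = "nonid_p_subgroups p G"
  have finS: "finite ?S" by (rule finite_nonid_p_subgroups[OF fin])
  have sub: "H \<subseteq> carrier G" "\<one> \<in> H" if "H \<in> ?S" for H
  proof -
    have "subgroup H G" using that unfolding nonid_p_subgroups_def p_subgroup_def by simp
    then show "H \<subseteq> carrier G" "\<one> \<in> H" using subgroup.subset subgroup.one_closed by auto
  qed
  have "(\<Sum>H\<in>?S. v H * int (card H)) = (\<Sum>H\<in>?S. \<Sum>g\<in>{g \<in> carrier G. g \<in> H}. v H)"
  proof (rule sum.cong[OF refl])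
    fix H assume "H \<in> ?S"
    then have "{g \<in> carrier G. g \<in> H} = H" using sub(1) by blast
    then show "v H * int (card H) = (\<Sum>g\<in>{g \<in> carrier G. g \<in> H}. v H)" by simp
  qed
  also have "\<dots> = (\<Sum>g\<in>carrier G. \<Sum>H\<in>{H \<in> ?S. g \<in> H}. v H)"
    by (rule sum.swap_restrict[OF finS fin])
  also have "\<dots> = (\<Sum>H\<in>{H \<in> ?S. \<one> \<in> H}. v H) + (\<Sum>g\<in>carrier G - {\<one>}. \<Sum>H\<in>{H \<in> ?S. g \<in> H}. v H)"
    by (rule sum.remove[OF fin one_closed])
  also have "(\<Sum>H\<in>{H \<in> ?S. \<one> \<in> H}. v H) = poset_euler_char (\<subseteq>) ?S"
  proof -
    have "{H \<in> ?S. \<one> \<in> H} = ?S" using sub(2) by blast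
    then show ?thesis using poset_euler_char_eq_sum_weighting[OF finS poset_subseteq v] by simp
  qed
  also have "(\<Sum>g\<in>carrier G - {\<one>}. \<Sum>H\<in>{H \<in> ?S. g \<in> H}. v H)
      = (\<Sum>g\<in>carrier G - {\<one>}. if generate G {g} \<in> ?S then 1 else 0)"
    using sum_weighting_containing[OF p v] by (intro sum.cong) auto
  also have "\<dots> = int (card {g \<in> carrier G - {\<one>}. generate G {g} \<in> ?S})"
    using fin by (simp add: sum.If_cases Int_def)
  also have "{g \<in> carrier G - {\<one>}. generate G {g} \<in> ?S} = {g \<in> carrier G. generate G {g} \<in> ?S}"
    using generate_one unfolding nonid_p_subgroups_def by auto
  finally show ?thesis .
qed

lemma pow_mod_ord:
  assumes "g \<in> carrier G"
  shows "g [^] (k::nat) = g [^] (k mod ord g)"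
proof -
  have "k = ord g * (k div ord g) + k mod ord g" by simp
  then have "g [^] k = (g [^] ord g) [^] (k div ord g) \<otimes> g [^] (k mod ord g)"
    using assms by (metis nat_pow_mult nat_pow_pow)
  then show ?thesis using assms by simp
qed

lemma generate_singleton_eq_powers:
  assumes fin: "finite (carrier G)" and g: "g \<in> carrier G"
  shows "generate G {g} = (\<lambda>k. g [^] k) ` {1..ord g}"
proof -
  have "g [^] k \<in> (\<lambda>k. g [^] k) ` {1..ord g}" for k :: nat
  proof (cases "k mod ord g = 0")
    case True
    have "g [^] k = g [^] (k mod ord g)" by (rule pow_mod_ord[OF g])
    also have "\<dots> = g [^] ord g" using True g by simp
    finally have "g [^] k = g [^] ord g" .
    then show ?thesis using ord_ge_1[OF fin g] by auto
  next
    case False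
    then have "k mod ord g \<in> {1..ord g}" using ord_ge_1[OF fin g] by (simp add: less_imp_le)
    then show ?thesis using pow_mod_ord[OF g] by blast
  qed
  then show ?thesis unfolding generate_pow_on_finite_carrier[OF fin g] by blast
qed

lemma card_generators:
  assumes fin: "finite (carrier G)" and g0: "g0 \<in> carrier G"
  shows "card {g \<in> carrier G. generate G {g} = generate G {g0}} = totient (ord g0)"
proof -
  let ?C = "generate G {g0}"
  have C: "subgroup ?C G" using generate_is_subgroup g0 by simp
  have "finite ?C" using fin subgroup.subset[OF C] finite_subset by blast
  have iff: "generate G {g} = ?C \<longleftrightarrow> g \<in> ?C \<and> ord g = ord g0" if g: "g \<in> carrier G" for g
  proof
    assume "generate G {g} = ?C"
    then show "g \<in> ?C \<and> ord g = ord g0"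
      using generate.incl[of g "{g}" G] generate_pow_card[OF g] generate_pow_card[OF g0] by auto
  next
    assume a: "g \<in> ?C \<and> ord g = ord g0"
    then have "generate G {g} \<subseteq> ?C" using C by (intro generate_subgroup_incl) auto
    moreover have "card (generate G {g}) = card ?C"
      using generate_pow_card[OF g] generate_pow_card[OF g0] a by simp
    ultimately show "generate G {g} = ?C" using \<open>finite ?C\<close> by (simp add: card_subset_eq)
  qed
  have "{g \<in> carrier G. generate G {g} = ?C} = (\<lambda>k. g0 [^] k) ` totatives (ord g0)"
  proof
    show "{g \<in> carrier G. generate G {g} = ?C} \<subseteq> (\<lambda>k. g0 [^] k) ` totatives (ord g0)"
    proof clarify
      fix g assume g: "g \<in> carrier G" "generate G {g} = ?C"
      then obtain k where k: "k \<in> {1..ord g0}" "g = g0 [^] k"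
        using iff generate_singleton_eq_powers[OF fin g0] by blast
      then have "coprime k (ord g0)" using iff[OF g(1)] g(2) pow_ord_eq_ord_iff[OF fin g0] by simp
      then show "g \<in> (\<lambda>k. g0 [^] k) ` totatives (ord g0)" using k by (auto simp: totatives_def)
    qed
    show "(\<lambda>k. g0 [^] k) ` totatives (ord g0) \<subseteq> {g \<in> carrier G. generate G {g} = ?C}"
    proof clarify
      fix k assume "k \<in> totatives (ord g0)"
      then have "k \<in> {1..ord g0}" "coprime k (ord g0)" by (auto simp: totatives_def)
      moreover have "g0 [^] k \<in> carrier G" using g0 by simp
      ultimately show "g0 [^] k \<in> carrier G \<and> generate G {g0 [^] k} = ?C"
        using iff pow_ord_eq_ord_iff[OF fin g0] generate_singleton_eq_powers[OF fin g0] by auto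
    qed
  qed
  moreover have "inj_on (\<lambda>k. g0 [^] k) (totatives (ord g0))"
    using ord_inj'[OF g0] by (rule inj_on_subset) (auto simp: totatives_def)
  ultimately show ?thesis unfolding totient_def by (simp add: card_image)
qed

lemma card_generators_nonid_cyclic_p_subgroup:
  assumes fin: "finite (carrier G)" and p: "Factorial_Ring.prime p"
    and C: "C \<in> nonid_cyclic_p_subgroups p G"
  shows "real (card {g \<in> carrier G. generate G {g} = C}) = (real p - 1) / real p * real (card C)"
proof -
  obtain g0 k where g0: "g0 \<in> carrier G" "C = generate G {g0}" and C1: "subgroup C G" "C \<noteq> {\<one>}"
    and k: "card C = p ^ k"
    using C unfolding nonid_cyclic_p_subgroups_def nonid_p_subgroups_def p_subgroup_def by blast
  have "k > 0"
  proof (rule ccontr)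
    assume "\<not> k > 0"
    then have "card C = 1" using k by simp
    then obtain c where "C = {c}" by (rule card_1_singletonE)
    then show False using C1 subgroup.one_closed[OF C1(1)] by simp
  qed
  have "ord g0 = p ^ k" using generate_pow_card[OF g0(1)] g0(2) k by simp
  then have "card {g \<in> carrier G. generate G {g} = C} = totient (p ^ k)"
    using card_generators[OF fin g0(1)] g0(2) by simp
  also have "\<dots> = p ^ (k - 1) * (p - 1)" using totient_prime_power[OF p \<open>k > 0\<close>] .
  also have "real \<dots> = real p ^ (k - 1) * (real p - 1)"
    using prime_gt_0_nat[OF p] by simp
  also have "\<dots> = (real p - 1) / real p * real (card C)"
  proof -
    have "p ^ k = p * p ^ (k - 1)" using \<open>k > 0\<close> by (cases k) simp_all
    then have "real (card C) = real p * real p ^ (k - 1)" using k by (metis of_nat_mult of_nat_power)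
    then show ?thesis using prime_gt_0_nat[OF p] by (simp add: field_simps)
  qed
  finally show ?thesis .
qed


lemma sum_normalizer_quotients_mult_card:
  assumes fin: "finite (carrier G)" and p: "Factorial_Ring.prime p"
  shows "(\<Sum>H\<in>nonid_p_subgroups p G.
            real (card H) - real_of_int (chi_S p (G\<lparr>carrier := normalizer G H\<rparr> Mod H)) * real (card H)
              + real_of_int (subgroup_mu G H))
         = (real p - 1) / real p * (\<Sum>C\<in>nonid_cyclic_p_subgroups p G. real (card C))"
proof -
  let ?S = "nonid_p_subgroups p G" and ?Cyc = "nonid_cyclic_p_subgroups p G"
  let ?A = "{g \<in> carrier G. generate G {g} \<in> ?S}"
  have finS: "finite ?S" by (rule finite_nonid_p_subgroups[OF fin])
  obtain v where v: "coweighting (\<lambda>H K. K \<subseteq> H) ?S v"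
    using coweighting_exists[OF finS poset_converse[OF poset_subseteq]] by blast
  have "(\<Sum>H\<in>?S. real (card H) - real_of_int (chi_S p (G\<lparr>carrier := normalizer G H\<rparr> Mod H)) * real (card H)
              + real_of_int (subgroup_mu G H))
      = (\<Sum>H\<in>?S. real_of_int (v H * int (card H) + subgroup_mu G H))"
  proof (rule sum.cong[OF refl])
    fix H assume "H \<in> ?S"
    then have vH: "v H = 1 - chi_S p (G\<lparr>carrier := normalizer G H\<rparr> Mod H)"
      by (rule weighting_nonid_p_subgroups_eq[OF fin p v])
    show "real (card H) - real_of_int (chi_S p (G\<lparr>carrier := normalizer G H\<rparr> Mod H)) * real (card H)
        + real_of_int (subgroup_mu G H) = real_of_int (v H * int (card H) + subgroup_mu G H)"
      unfolding vH by (simp add: algebra_simps)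
  qed
  also have "\<dots> = real_of_int ((\<Sum>H\<in>?S. v H * int (card H)) + (\<Sum>H\<in>?S. subgroup_mu G H))"
    by (simp add: sum.distrib)
  also have "\<dots> = real (card ?A)"
    using sum_weighting_mult_card[OF fin p v] poset_euler_char_nonid_p_subgroups[OF fin p] by simp
  also have "card ?A = (\<Sum>C\<in>?Cyc. card {g \<in> carrier G. generate G {g} = C})"
  proof -
    have "?Cyc \<subseteq> ?S" unfolding nonid_cyclic_p_subgroups_def by blast
    have "(\<lambda>g. generate G {g}) ` ?A \<subseteq> ?Cyc" unfolding nonid_cyclic_p_subgroups_def by blast
    then have "(\<Sum>C\<in>?Cyc. \<Sum>g\<in>{g \<in> ?A. generate G {g} = C}. 1) = (\<Sum>g\<in>?A. 1::nat)"
      using fin finite_subset[OF \<open>?Cyc \<subseteq> ?S\<close> finS] by (intro sum.group) auto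
    then have "card ?A = (\<Sum>C\<in>?Cyc. card {g \<in> ?A. generate G {g} = C})" by simp
    also have "\<dots> = (\<Sum>C\<in>?Cyc. card {g \<in> carrier G. generate G {g} = C})"
      using \<open>?Cyc \<subseteq> ?S\<close> by (intro sum.cong refl arg_cong[where f = card]) blast
    finally show ?thesis .
  qed
  finally show ?thesis
    using card_generators_nonid_cyclic_p_subgroup[OF fin p] by (simp add: sum_distrib_left)
qed

lemma centralizer_subgroup:
  assumes x: "x \<in> carrier G"
  shows "subgroup (centralizer G {x}) G"
proof (rule subgroupI)
  show "centralizer G {x} \<subseteq> carrier G" unfolding centralizer_def by blast
  show "centralizer G {x} \<noteq> {}" using x unfolding centralizer_def by auto
  fix a b assume a: "a \<in> centralizer G {x}" and b: "b \<in> centralizer G {x}"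
  then have ab: "a \<in> carrier G" "b \<in> carrier G" "a \<otimes> x = x \<otimes> a" "b \<otimes> x = x \<otimes> b"
    unfolding centralizer_def by auto
  have "inv a \<otimes> x = inv a \<otimes> (x \<otimes> a) \<otimes> inv a" using ab(1) x by (simp add: m_assoc)
  also have "\<dots> = inv a \<otimes> (a \<otimes> x) \<otimes> inv a" using ab by simp
  also have "\<dots> = x \<otimes> inv a" using ab(1) x by (simp flip: m_assoc)
  finally show "inv a \<in> centralizer G {x}" using ab unfolding centralizer_def by simp
  have "a \<otimes> b \<otimes> x = a \<otimes> (x \<otimes> b)" using ab x by (simp add: m_assoc)
  also have "\<dots> = x \<otimes> (a \<otimes> b)" using ab x by (simp flip: m_assoc)
  finally have "a \<otimes> b \<otimes> x = x \<otimes> (a \<otimes> b)" .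
  then show "a \<otimes> b \<in> centralizer G {x}" using ab unfolding centralizer_def by simp
qed

text \<open>The Moebius function of a \<open>p\<close>-subgroup is intrinsic: both sides are coweightings of the
  \<open>p\<close>-subgroups below it.\<close>
lemma subgroup_mu_subgroup:
  assumes fin: "finite (carrier G)" and p: "Factorial_Ring.prime p" and K: "subgroup K G"
    and H: "H \<in> nonid_p_subgroups p (G\<lparr>carrier := K\<rparr>)"
  shows "subgroup_mu (G\<lparr>carrier := K\<rparr>) H = subgroup_mu G H"
proof -
  interpret K: group "G\<lparr>carrier := K\<rparr>" by (rule subgroup_imp_group[OF K])
  let ?SK = "nonid_p_subgroups p (G\<lparr>carrier := K\<rparr>)"
  have finK: "finite (carrier (G\<lparr>carrier := K\<rparr>))" using fin subgroup.subset[OF K] finite_subset by auto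
  have SK: "?SK = {H \<in> nonid_p_subgroups p G. H \<subseteq> K}" by (rule nonid_p_subgroups_subgroup[OF K])
  have "coweighting (\<subseteq>) ?SK (\<lambda>H. - subgroup_mu G H)"
    by (rule coweighting_down_closed[OF coweighting_neg_subgroup_mu[OF fin p]]) (auto simp: SK)
  with K.coweighting_neg_subgroup_mu[OF finK p]
  have "- subgroup_mu (G\<lparr>carrier := K\<rparr>) H = - subgroup_mu G H"
    by (rule coweighting_unique[OF K.finite_nonid_p_subgroups[OF finK] poset_subseteq _ _ H])
  then show ?thesis by simp
qed

lemma centralizer_normalizer_eq_normalizer_centralizer:
  assumes fin: "finite (carrier G)" and x: "x \<in> carrier G"
    and H: "subgroup H G" "H \<subseteq> centralizer G {x}"
  shows "centralizer (G\<lparr>carrier := normalizer G H\<rparr>) {x} = normalizer (G\<lparr>carrier := centralizer G {x}\<rparr>) H"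
proof -
  let ?Cx = "centralizer G {x}"
  have Cx: "subgroup ?Cx G" by (rule centralizer_subgroup[OF x])
  interpret Cx: group "G\<lparr>carrier := ?Cx\<rparr>" by (rule subgroup_imp_group[OF Cx])
  have finH: "finite H" using fin subgroup.subset[OF H(1)] finite_subset by blast
  have HCx: "subgroup H (G\<lparr>carrier := ?Cx\<rparr>)" using subgroup_incl[OF H(1) Cx H(2)] .
  have "normalizer (G\<lparr>carrier := ?Cx\<rparr>) H = {g \<in> ?Cx. \<forall>h\<in>H. g \<otimes> h \<otimes> inv\<^bsub>G\<lparr>carrier := ?Cx\<rparr>\<^esub> g \<in> H}"
    using Cx.normalizer_eq_conj_closed[OF HCx finH] by simp
  also have "\<dots> = {g \<in> ?Cx. \<forall>h\<in>H. g \<otimes> h \<otimes> inv g \<in> H}"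
    using m_inv_consistent[OF Cx] by auto
  also have "\<dots> = centralizer (G\<lparr>carrier := normalizer G H\<rparr>) {x}"
    unfolding normalizer_eq_conj_closed[OF H(1) finH] centralizer_def by auto
  finally show ?thesis by simp
qed

lemma nonid_p_subgroups_centralized:
  assumes x: "x \<in> carrier G"
  shows "{H \<in> nonid_p_subgroups p G. x \<in> centralizer G H} = nonid_p_subgroups p (G\<lparr>carrier := centralizer G {x}\<rparr>)"
proof -
  have "H \<subseteq> carrier G" if "H \<in> nonid_p_subgroups p G" for H
    using that subgroup.subset unfolding nonid_p_subgroups_def p_subgroup_def by blast
  then have "{H \<in> nonid_p_subgroups p G. x \<in> centralizer G H}
      = {H \<in> nonid_p_subgroups p G. H \<subseteq> centralizer G {x}}"
    using x unfolding centralizer_def by auto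
  also have "\<dots> = nonid_p_subgroups p (G\<lparr>carrier := centralizer G {x}\<rparr>)"
    by (rule nonid_p_subgroups_subgroup[OF centralizer_subgroup[OF x], symmetric])
  finally show ?thesis .
qed

text \<open>The first identity for \<open>C\<^sub>G(x)\<close>.\<close>
lemma sum_centralizing_nonid_p_subgroups_eq_zero:
  assumes fin: "finite (carrier G)" and p: "Factorial_Ring.prime p" and x: "x \<in> carrier G"
  shows "(\<Sum>H\<in>{H \<in> nonid_p_subgroups p G. x \<in> centralizer G H}.
            1 - chi_S p (G\<lparr>carrier := centralizer (G\<lparr>carrier := normalizer G H\<rparr>) {x}\<rparr> Mod H)
              + subgroup_mu G H) = 0"
proof -
  let ?Cx = "centralizer G {x}"
  have Cx: "subgroup ?Cx G" by (rule centralizer_subgroup[OF x])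
  interpret Cx: group "G\<lparr>carrier := ?Cx\<rparr>" by (rule subgroup_imp_group[OF Cx])
  have finCx: "finite (carrier (G\<lparr>carrier := ?Cx\<rparr>))" using fin subgroup.subset[OF Cx] finite_subset by auto
  have "(\<Sum>H\<in>{H \<in> nonid_p_subgroups p G. x \<in> centralizer G H}.
            1 - chi_S p (G\<lparr>carrier := centralizer (G\<lparr>carrier := normalizer G H\<rparr>) {x}\<rparr> Mod H)
              + subgroup_mu G H)
      = (\<Sum>H\<in>nonid_p_subgroups p (G\<lparr>carrier := ?Cx\<rparr>).
            1 - chi_S p ((G\<lparr>carrier := ?Cx\<rparr>)\<lparr>carrier := normalizer (G\<lparr>carrier := ?Cx\<rparr>) H\<rparr> Mod H)
              + subgroup_mu (G\<lparr>carrier := ?Cx\<rparr>) H)"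
    unfolding nonid_p_subgroups_centralized[OF x]
  proof (rule sum.cong[OF refl])
    fix H assume H: "H \<in> nonid_p_subgroups p (G\<lparr>carrier := ?Cx\<rparr>)"
    then have "subgroup H G" "H \<subseteq> ?Cx"
      unfolding nonid_p_subgroups_subgroup[OF Cx] by (auto simp: nonid_p_subgroups_def p_subgroup_def)
    then show "1 - chi_S p (G\<lparr>carrier := centralizer (G\<lparr>carrier := normalizer G H\<rparr>) {x}\<rparr> Mod H)
              + subgroup_mu G H
        = 1 - chi_S p ((G\<lparr>carrier := ?Cx\<rparr>)\<lparr>carrier := normalizer (G\<lparr>carrier := ?Cx\<rparr>) H\<rparr> Mod H)
              + subgroup_mu (G\<lparr>carrier := ?Cx\<rparr>) H"
      using centralizer_normalizer_eq_normalizer_centralizer[OF fin x]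
        subgroup_mu_subgroup[OF fin p Cx H] by simp
  qed
  also have "\<dots> = 0" by (rule Cx.sum_normalizer_quotients_eq_zero[OF finCx p])
  finally show ?thesis .
qed

lemma sum_centralizer_quotients_eq_zero:
  assumes fin: "finite (carrier G)" and p: "Factorial_Ring.prime p"
  shows "(\<Sum>H\<in>nonid_p_subgroups p G. \<Sum>x\<in>centralizer G H.
            1 - chi_S p (G\<lparr>carrier := centralizer (G\<lparr>carrier := normalizer G H\<rparr>) {x}\<rparr> Mod H)
              + subgroup_mu G H) = 0"
proof -
  let ?f = "\<lambda>H x. 1 - chi_S p (G\<lparr>carrier := centralizer (G\<lparr>carrier := normalizer G H\<rparr>) {x}\<rparr> Mod H)
              + subgroup_mu G H"
  have "{x \<in> carrier G. x \<in> centralizer G H} = centralizer G H" for H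
    unfolding centralizer_def by blast
  then have "(\<Sum>H\<in>nonid_p_subgroups p G. \<Sum>x\<in>centralizer G H. ?f H x)
      = (\<Sum>H\<in>nonid_p_subgroups p G. \<Sum>x\<in>{x \<in> carrier G. x \<in> centralizer G H}. ?f H x)"
    by simp
  also have "\<dots> = (\<Sum>x\<in>carrier G. \<Sum>H\<in>{H \<in> nonid_p_subgroups p G. x \<in> centralizer G H}. ?f H x)"
    by (rule sum.swap_restrict[OF finite_nonid_p_subgroups[OF fin] fin])
  also have "\<dots> = 0"
    using sum_centralizing_nonid_p_subgroups_eq_zero[OF fin p] by simp
  finally show ?thesis .
qed

end

theorem corollary1p2:
  fixes G :: "('a, 'b) monoid_scheme" and p :: nat
  assumes "group G" and "finite (carrier G)" and "Factorial_Ring.prime p"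
  shows "((\<Sum>H\<in>nonid_p_subgroups p G.
            1 - chi_S p (G\<lparr>carrier := normalizer G H\<rparr> Mod H) + subgroup_mu G H) = 0)
    \<and> ((\<Sum>H\<in>nonid_p_subgroups p G. \<Sum>x\<in>centralizer G H.
            1 - chi_S p (G\<lparr>carrier := centralizer (G\<lparr>carrier := normalizer G H\<rparr>) {x}\<rparr> Mod H)
              + subgroup_mu G H) = 0)
    \<and> ((\<Sum>H\<in>nonid_p_subgroups p G.
            real (card H) - real_of_int (chi_S p (G\<lparr>carrier := normalizer G H\<rparr> Mod H)) * real (card H)
              + real_of_int (subgroup_mu G H))
         = (real p - 1) / real p * (\<Sum>C\<in>nonid_cyclic_p_subgroups p G. real (card C)))"
proof -
  interpret group G by fact
  show ?thesis
    by (intro conjI sum_normalizer_quotients_eq_zero sum_centralizer_quotients_eq_zero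
        sum_normalizer_quotients_mult_card assms(2,3))
qed

end
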